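(* Assume Assumptions 1 and 2 hold. Then, as $n\to\infty$, uniformly in $k$: (1) $\mathbb{E}[Z_{1,k}Z_{2,k}]=-\frac{1}{n-1}$ (for every $n\ge2$); (2) for every $p\ge1$, $\mathbb{E}[|Z_{1,k}|^p]=O(1)$; (3) $\mathbb{E}[Z_{1,k}^2Z_{2,k}^2]=1+o(1)$; (4) $\mathbb{E}[Z_{1,k}^3Z_{2,k}]=O(1/n)$; (5) $\mathbb{E}[Z_{1,k}^2Z_{2,k}Z_{3,k}]=O(1/n)$; (6) $\mathbb{E}[Z_{1,k}Z_{2,k}Z_{3,k}Z_{4,k}]=O(1/n^2)$; (7) $\mathbb{E}[Z_{1,k}^5Z_{2,k}]=O(1/n)$; (8) $\mathbb{E}[Z_{1,k}^3Z_{2,k}^3]=O(1)$; (9) $\mathbb{E}[Z_{1,k}^4Z_{2,k}^2]=O(1)$; (10) $\mathbb{E}[Z_{1,k}^4Z_{2,k}Z_{3,k}]=O(1/n)$; (11) $\mathbb{E}[Z_{1,k}^3Z_{2,k}^2Z_{3,k}]=O(1/n)$; (12) $\mathbb{E}[Z_{1,k}^3Z_{2,k}Z_{3,k}Z_{4,k}]=O(1/n^2)$.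
   Context: Let $A=(A_{i,k})_{1\le i\le n,\,1\le k\le N}$ be a random matrix with independent columns, such that for each $k$ the entries $A_{1,k},\dots,A_{n,k}$ are i.i.d.; write $m_k=\mathbb{E}[A_{1,k}]$ and $\sigma_k^2=\mathrm{Var}(A_{1,k})$. Put $\bar A_k=\frac1n\sum_{i=1}^n A_{i,k}$, $s_k^2=\frac1n\sum_{i=1}^n(A_{i,k}-\bar A_k)^2$ (assumed $>0$ a.s.), and $Z_{i,k}=(A_{i,k}-\bar A_k)/s_k$. Assumption 1: there exist $d>0$, $C>0$ and a neighborhood $V_0$ of $0$ such that for all $\lambda\in V_0$, all $i\neq j$ and all $k$: (1.1) $\mathbb{E}[\exp(\lambda((A_{i,k}-m_k)^2-\sigma_k^2))]\le C\exp(d\lambda^2)$; (1.2) $\mathbb{E}[\exp(\lambda(A_{i,k}-m_k))]\le C\exp(d\lambda^2)$; (1.3) $\mathbb{E}[\exp(\lambda(A_{i,k}-m_k)(A_{j,k}-m_k))]\le C\exp(d\lambda^2)$. Assumption 2: (2.1) $\inf_{k}\sigma_k^2=\delta_{min}>0$; (2.2) $\sup_k\sigma_k^2=\delta_{max}<+\infty$. *)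

theory Defs
  imports "HOL-Probability.Probability"
begin

text \<open>The matrix entries: A i k is the entry in row i, column k (0-based indices,
  so the paper's row 1 is index 0). Only the first n rows are used for sample size n.\<close>

definition col_mean :: "(nat \<Rightarrow> nat \<Rightarrow> 'a \<Rightarrow> real) \<Rightarrow> nat \<Rightarrow> nat \<Rightarrow> 'a \<Rightarrow> real" where
  "col_mean A n k \<omega> = (\<Sum>i<n. A i k \<omega>) / real n"

definition col_var :: "(nat \<Rightarrow> nat \<Rightarrow> 'a \<Rightarrow> real) \<Rightarrow> nat \<Rightarrow> nat \<Rightarrow> 'a \<Rightarrow> real" where
  "col_var A n k \<omega> = (\<Sum>i<n. (A i k \<omega> - col_mean A n k \<omega>)\<^sup>2) / real n"

definition Zst :: "(nat \<Rightarrow> nat \<Rightarrow> 'a \<Rightarrow> real) \<Rightarrow> nat \<Rightarrow> nat \<Rightarrow> nat \<Rightarrow> 'a \<Rightarrow> real" where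
  "Zst A n i k \<omega> = (A i k \<omega> - col_mean A n k \<omega>) / sqrt (col_var A n k \<omega>)"

definition unif_bigO :: "(nat \<Rightarrow> nat \<Rightarrow> real) \<Rightarrow> (nat \<Rightarrow> real) \<Rightarrow> bool" where
  "unif_bigO f g \<longleftrightarrow> (\<exists>C N0. \<forall>n\<ge>N0. \<forall>k. \<bar>f n k\<bar> \<le> C * g n)"

definition unif_littleo1 :: "(nat \<Rightarrow> nat \<Rightarrow> real) \<Rightarrow> bool" where
  "unif_littleo1 f \<longleftrightarrow> (\<forall>\<epsilon>>0. \<exists>N0. \<forall>n\<ge>N0. \<forall>k. \<bar>f n k\<bar> \<le> \<epsilon>)"

end

theory Submission
  imports Defs
begin

text \<open>After standardization the vector Z = (Z_1, ..., Z_n) of a column satisfies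
  \<Sum>_j Z_j = 0 and \<Sum>_j Z_j^2 = n, and its law is exchangeable because the rows are i.i.d.
  Multiplying these constraints by a monomial in Z_1, ..., Z_r and taking expectations expresses a
  moment in which a further index occurs once as -1/(n - r) times a sum of moments in which that
  index is merged into one of the first r; e.g. (n - 1) E[Z_1^3 Z_2] = -E[Z_1^4]. Each new index therefore gains a factor 1/n,
  once the even moments E[Z_1^(2m)] are bounded uniformly in n and k. On the event that the
  sample variance is at least half its lower bound \<delta>, Z_1 is controlled by the centred entries,
  whose moments follow from the exponential moment bound; the complementary event has
  exponentially small probability by Chernoff bounds, which beats the trivial bound |Z_1| \<le> \<surd>n.
  Of the hypotheses only the moment generating function bound (1.2) and the lower variance bound
  (2.1) are used besides the i.i.d. rows.\<close>

lemma power_le_fact_mult_exp: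
  fixes x :: real assumes "0 \<le> x"
  shows "x ^ n \<le> fact n * exp x"
proof -
  have "x ^ n / fact n \<le> (\<Sum>i\<le>n. x ^ i / fact i)"
    using assms by (intro member_le_sum) auto
  also have "\<dots> \<le> exp x"
    using assms summable_exp_generic[of x]
    by (auto simp: exp_def divide_inverse ac_simps intro!: sum_le_suminf)
  finally show ?thesis by (simp add: field_simps)
qed

lemma power_even_le_exp_abs:
  fixes w t :: real assumes "0 < t"
  shows "w ^ (2*m) \<le> fact (2*m) / t ^ (2*m) * exp (t * \<bar>w\<bar>)"
proof -
  have "(t * \<bar>w\<bar>) ^ (2*m) \<le> fact (2*m) * exp (t * \<bar>w\<bar>)"
    using assms by (intro power_le_fact_mult_exp) auto
  then show ?thesis
    using assms by (simp add: power_mult_distrib power_even_abs field_simps)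
qed

lemma power_mult_exp_neg_le:
  fixes c :: real assumes "0 < c"
  shows "real n ^ m * exp (- c * real n) \<le> fact m / c ^ m"
proof -
  have "(c * real n) ^ m \<le> fact m * exp (c * real n)"
    using assms by (intro power_le_fact_mult_exp) auto
  then show ?thesis
    using assms by (simp add: power_mult_distrib exp_minus field_simps)
qed

lemma exp_le_taylor1:
  fixes x :: real
  shows "exp x \<le> 1 + x + x\<^sup>2 * exp \<bar>x\<bar>"
proof -
  have "\<bar>exp x - (\<Sum>i\<le>1. x ^ i / fact i)\<bar> \<le> exp \<bar>x\<bar> * (\<bar>x\<bar> ^ Suc 1) / fact 1"
    using Taylor_exp_field[of x 1] by simp
  then show ?thesis
    by (simp add: power2_eq_square abs_le_iff algebra_simps)
qed

lemma exp_le_quadratic_exp_abs: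
  fixes s t w :: real assumes "0 \<le> s" and "0 < t" and "2 * s \<le> t"
  shows "exp (s * w) \<le> 1 + s * w + s\<^sup>2 * (8 / t\<^sup>2 * exp (t * \<bar>w\<bar>))"
proof -
  have "(t * w / 2)\<^sup>2 \<le> 2 * exp \<bar>t * w / 2\<bar>"
    using power_le_fact_mult_exp[of "\<bar>t * w / 2\<bar>" 2] by (simp add: power_divide)
  then have "w\<^sup>2 \<le> 8 / t\<^sup>2 * exp (t * \<bar>w\<bar> / 2)"
    using assms by (simp add: power_divide power_mult_distrib abs_mult field_simps)
  moreover have "exp (s * \<bar>w\<bar>) \<le> exp (t * \<bar>w\<bar> / 2)"
    using assms mult_right_mono[of "2 * s" t "\<bar>w\<bar>"] by simp
  ultimately have "w\<^sup>2 * exp (s * \<bar>w\<bar>) \<le> 8 / t\<^sup>2 * exp (t * \<bar>w\<bar> / 2) * exp (t * \<bar>w\<bar> / 2)"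
    by (intro mult_mono) auto
  also have "\<dots> = 8 / t\<^sup>2 * exp (t * \<bar>w\<bar>)" by (simp flip: exp_add)
  finally have "s\<^sup>2 * (w\<^sup>2 * exp (s * \<bar>w\<bar>)) \<le> s\<^sup>2 * (8 / t\<^sup>2 * exp (t * \<bar>w\<bar>))"
    by (intro mult_left_mono) auto
  moreover have "exp (s * w) \<le> 1 + s * w + s\<^sup>2 * (w\<^sup>2 * exp (s * \<bar>w\<bar>))"
    using exp_le_taylor1[of "s * w"] assms by (simp add: power_mult_distrib abs_mult)
  ultimately show ?thesis by linarith
qed

lemma exp_minus_le_quadratic:
  fixes y :: real assumes "0 \<le> y"
  shows "exp (- y) \<le> 1 - y + y\<^sup>2"
proof -
  have "exp (- y) \<le> 1 / (1 + y)"
    using assms exp_ge_add_one_self[of y] by (simp add: exp_minus field_simps)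
  also have "\<dots> \<le> 1 - y + y\<^sup>2"
    using assms by (simp add: field_simps power2_eq_square)
  finally show ?thesis .
qed

lemma power_even_mean_le:
  fixes w :: "nat \<Rightarrow> real" assumes "0 < n"
  shows "((\<Sum>j<n. w j) / real n) ^ (2*m) \<le> (\<Sum>j<n. w j ^ (2*m)) / real n"
proof -
  have "(\<lambda>x::real. x ^ (2*m)) (\<Sum>j<n. (1 / real n) *\<^sub>R w j)
      \<le> (\<Sum>j<n. (1 / real n) * (\<lambda>x. x ^ (2*m)) (w j))"
    using assms by (intro convex_on_sum[where C=UNIV] convex_power_even) auto
  then show ?thesis by (simp add: sum_divide_distrib[symmetric] sum_distrib_left[symmetric])
qed

lemma power_even_diff_le:
  fixes a b :: real
  shows "(a - b) ^ (2*m) \<le> 4 ^ m / 2 * (a ^ (2*m) + b ^ (2*m))"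
proof -
  have cv: "convex_on UNIV (\<lambda>x::real. x ^ (2*m))" by (rule convex_power_even) auto
  have "(a - b) ^ (2*m) \<le> 1/2 * (2*a) ^ (2*m) + 1/2 * (-2*b) ^ (2*m)"
    using conjunct2[OF cv[unfolded convex_on_def], rule_format, of "2*a" "-2*b" "1/2" "1/2"]
    by simp
  moreover have "(2::real) ^ (2*m) = 4 ^ m" "(-2::real) ^ (2*m) = 4 ^ m"
    by (simp_all add: power_mult)
  ultimately show ?thesis unfolding power_mult_distrib by (simp add: algebra_simps)
qed

lemma abs_powr_le_1_add_power_even:
  fixes z p :: real assumes "0 \<le> p" and "p \<le> real (2*m)"
  shows "\<bar>z\<bar> powr p \<le> 1 + z ^ (2*m)"
proof (cases "\<bar>z\<bar> \<le> 1")
  case True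
  then have "\<bar>z\<bar> powr p \<le> 1" using assms by (intro powr_le1) auto
  moreover have "0 \<le> z ^ (2*m)" by (simp add: zero_le_even_power)
  ultimately show ?thesis by linarith
next
  case False
  then have "\<bar>z\<bar> powr p \<le> \<bar>z\<bar> powr real (2*m)" using assms by (intro powr_mono) auto
  also have "\<dots> = \<bar>z\<bar> ^ (2*m)" using False by (intro powr_realpow) auto
  also have "\<dots> = z ^ (2*m)" by (simp add: power_even_abs)
  finally show ?thesis by simp
qed

lemma abs_mult_le_half_sum_sq: "\<bar>x * y\<bar> \<le> (x\<^sup>2 + y\<^sup>2) / 2" for x y :: real
  using sum_squares_bound[of "\<bar>x\<bar>" "\<bar>y\<bar>"] by (simp add: abs_mult)

lemma abs_le_of_diff_mult_eq:
  assumes "real (n - r) * q = t" and "\<bar>t\<bar> \<le> B" and "4 * r \<le> 3 * n" and "0 < n"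
  shows "\<bar>q\<bar> \<le> 4 * B / real n"
proof -
  have "real n / 4 \<le> real (n - r)" using assms(3) by (simp add: of_nat_diff)
  then have "real n / 4 * \<bar>q\<bar> \<le> \<bar>t\<bar>"
    using assms(1) mult_right_mono[of "real n / 4" "real (n - r)" "\<bar>q\<bar>"] by (auto simp: abs_mult)
  then show ?thesis using assms(2,4) by (simp add: field_simps)
qed

section \<open>Standardized samples\<close>

definition sample_mean :: "nat \<Rightarrow> (nat \<Rightarrow> real) \<Rightarrow> real" where
  "sample_mean n y = (\<Sum>j<n. y j) / real n"

definition sample_var :: "nat \<Rightarrow> (nat \<Rightarrow> real) \<Rightarrow> real" where
  "sample_var n y = (\<Sum>j<n. (y j - sample_mean n y)\<^sup>2) / real n"

text \<open>Coordinates from n on are set to 0, so that standardize n y only depends on the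
  first n coordinates of y and commutes with permutations of them.\<close>
definition standardize :: "nat \<Rightarrow> (nat \<Rightarrow> real) \<Rightarrow> nat \<Rightarrow> real" where
  "standardize n y i = (if i < n then (y i - sample_mean n y) / sqrt (sample_var n y) else 0)"

lemma col_var_eq_sample_var: "col_var A n k \<omega> = sample_var n (\<lambda>j. A j k \<omega>)"
  by (simp add: col_var_def col_mean_def sample_var_def sample_mean_def)

lemma Zst_eq_standardize: "i < n \<Longrightarrow> Zst A n i k \<omega> = standardize n (\<lambda>j. A j k \<omega>) i"
  by (simp add: Zst_def standardize_def col_var_eq_sample_var col_mean_def sample_mean_def)

lemma sample_var_shift:
  fixes y :: "nat \<Rightarrow> real" assumes "0 < n"
  shows "sample_var n y = (\<Sum>j<n. (y j - c)\<^sup>2) / real n - ((\<Sum>j<n. y j - c) / real n)\<^sup>2"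
proof -
  define S where "S = (\<Sum>j<n. y j - c)"
  define b where "b = S / real n"
  have mean: "sample_mean n y = c + b"
    using assms by (simp add: sample_mean_def b_def S_def sum_subtractf field_simps)
  have "(\<Sum>j<n. (y j - (c + b))\<^sup>2) = (\<Sum>j<n. (y j - c)\<^sup>2 - 2 * b * (y j - c) + b\<^sup>2)"
    by (rule sum.cong) (auto simp: power2_eq_square algebra_simps)
  also have "\<dots> = (\<Sum>j<n. (y j - c)\<^sup>2) - 2 * b * S + real n * b\<^sup>2"
    by (simp add: sum.distrib sum_subtractf S_def flip: sum_distrib_left)
  finally show ?thesis
    using assms by (simp add: sample_var_def mean b_def S_def[symmetric] field_simps power2_eq_square)
qed

lemma small_sample_var_cases:
  fixes y :: "nat \<Rightarrow> real"
  assumes "0 < n" and "0 < v" and "sample_var n y < v / 2"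
  shows "0 \<le> (\<Sum>j<n. 3 * v / 4 - (y j - c)\<^sup>2) \<or> 0 \<le> (\<Sum>j<n. 1 * (y j - c) - sqrt v / 2)
    \<or> 0 \<le> (\<Sum>j<n. (-1) * (y j - c) - sqrt v / 2)"
proof (rule ccontr)
  define S1 where "S1 = (\<Sum>j<n. y j - c)"
  define S2 where "S2 = (\<Sum>j<n. (y j - c)\<^sup>2)"
  assume "\<not> ?thesis"
  moreover have "(\<Sum>j<n. 3 * v / 4 - (y j - c)\<^sup>2) = real n * (3 * v / 4) - S2"
    "(\<Sum>j<n. 1 * (y j - c) - sqrt v / 2) = S1 - real n * (sqrt v / 2)"
    "(\<Sum>j<n. (-1) * (y j - c) - sqrt v / 2) = - S1 - real n * (sqrt v / 2)"
    by (simp_all add: S1_def S2_def sum_subtractf sum_negf)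
  ultimately have "real n * (3 * v / 4) < S2" "\<bar>S1\<bar> < real n * (sqrt v / 2)"
    by (auto simp: abs_less_iff)
  then have "3 * v / 4 < S2 / real n" "\<bar>S1 / real n\<bar> < sqrt v / 2"
    using assms(1) by (simp_all add: field_simps)
  moreover from this(2) have "\<bar>S1 / real n\<bar>\<^sup>2 < (sqrt v / 2)\<^sup>2"
    by (intro power_strict_mono) auto
  then have "(S1 / real n)\<^sup>2 < v / 4"
    using assms(2) by (simp add: power_divide)
  moreover have "sample_var n y = S2 / real n - (S1 / real n)\<^sup>2"
    unfolding S1_def S2_def by (rule sample_var_shift[OF assms(1)])
  ultimately show False using assms(3) by simp
qed

lemma standardize_restrict: "standardize n (restrict y {..<n}) = standardize n y"
  by (simp add: standardize_def sample_var_def sample_mean_def fun_eq_iff)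

lemma standardize_permute:
  assumes "\<tau> permutes {..<n}"
  shows "standardize n (y \<circ> \<tau>) = standardize n y \<circ> \<tau>"
proof -
  have sum_perm: "(\<Sum>j<n. f (\<tau> j)) = (\<Sum>j<n. f j)" for f :: "nat \<Rightarrow> real"
    using sum.permute[OF assms, of f] by (simp add: comp_def)
  then have "sample_mean n (y \<circ> \<tau>) = sample_mean n y" by (simp add: sample_mean_def)
  moreover have "sample_var n (y \<circ> \<tau>) = sample_var n y"
    using sum_perm[of "\<lambda>j. (y j - sample_mean n y)\<^sup>2"] \<open>sample_mean n (y \<circ> \<tau>) = _\<close>
    by (simp add: sample_var_def)
  moreover have "i < n \<longleftrightarrow> \<tau> i < n" for i
    using assms by (metis lessThan_iff permutes_in_image)
  moreover have "\<not> i < n \<Longrightarrow> \<tau> i = i" for i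
    using assms by (simp add: permutes_not_in)
  ultimately show ?thesis by (auto simp: standardize_def fun_eq_iff)
qed

lemma measurable_standardize[measurable]:
  "standardize n \<in> measurable (Pi\<^sub>M {..<n} (\<lambda>_. borel)) (Pi\<^sub>M UNIV (\<lambda>_. borel))"
proof (rule measurable_PiM_single')
  fix i :: nat
  have [measurable]: "j < n \<Longrightarrow> (\<lambda>y. y j) \<in> borel_measurable (Pi\<^sub>M {..<n} (\<lambda>_. borel))" for j
    by (intro measurable_component_singleton) auto
  have [measurable]: "sample_mean n \<in> borel_measurable (Pi\<^sub>M {..<n} (\<lambda>_. borel))"
    unfolding sample_mean_def[abs_def] by measurable
  have [measurable]: "sample_var n \<in> borel_measurable (Pi\<^sub>M {..<n} (\<lambda>_. borel))"
    unfolding sample_var_def[abs_def] by measurable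
  show "(\<lambda>y. standardize n y i) \<in> borel_measurable (Pi\<^sub>M {..<n} (\<lambda>_. borel))"
    by (cases "i < n") (auto simp: standardize_def)
qed (auto simp: space_PiM)

lemma sum_standardize: "(\<Sum>j<n. standardize n y j) = 0"
proof (cases "n = 0")
  case False
  have "(\<Sum>j<n. standardize n y j) = (\<Sum>j<n. y j - sample_mean n y) / sqrt (sample_var n y)"
    by (simp add: standardize_def sum_divide_distrib)
  also have "(\<Sum>j<n. y j - sample_mean n y) = 0"
    using False by (simp add: sum_subtractf sample_mean_def)
  finally show ?thesis by simp
qed simp

lemma sum_sq_standardize:
  assumes "0 < sample_var n y"
  shows "(\<Sum>j<n. (standardize n y j)\<^sup>2) = real n"
proof -
  have "(\<Sum>j<n. (standardize n y j)\<^sup>2) = (\<Sum>j<n. (y j - sample_mean n y)\<^sup>2) / sample_var n y"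
    using assms by (simp add: standardize_def power_divide sum_divide_distrib)
  also have "\<dots> = real n"
    using assms by (cases "n = 0") (auto simp: sample_var_def field_simps)
  finally show ?thesis .
qed

lemma standardize_sq_le: "(standardize n y i)\<^sup>2 \<le> real n"
proof (cases "i < n \<and> 0 < sample_var n y")
  case True
  then have "(standardize n y i)\<^sup>2 \<le> (\<Sum>j<n. (standardize n y j)\<^sup>2)"
    by (intro member_le_sum) auto
  then show ?thesis using True sum_sq_standardize by simp
next
  case False
  moreover have "0 \<le> sample_var n y" by (simp add: sample_var_def sum_nonneg)
  ultimately show ?thesis by (auto simp: standardize_def)
qed

lemma abs_standardize_le: "\<bar>standardize n y i\<bar> \<le> sqrt (real n)"
  using real_sqrt_le_mono[OF standardize_sq_le[of n y i]] by simp

lemma standardize_power_le: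
  fixes y :: "nat \<Rightarrow> real"
  assumes "0 < n" and "0 < v" and "v \<le> sample_var n y"
  shows "(standardize n y 0) ^ (2*m)
    \<le> (4 / v) ^ m / 2 * ((y 0 - c) ^ (2*m) + (\<Sum>j<n. (y j - c) ^ (2*m)) / real n)"
proof -
  let ?d = "y 0 - sample_mean n y"
  have "sample_mean n y - c = (\<Sum>j<n. y j - c) / real n"
    using assms(1) by (simp add: sample_mean_def sum_subtractf field_simps)
  then have mean: "(sample_mean n y - c) ^ (2*m) \<le> (\<Sum>j<n. (y j - c) ^ (2*m)) / real n"
    using power_even_mean_le[OF assms(1)] by simp
  have "?d ^ (2*m) \<le> 4 ^ m / 2 * ((y 0 - c) ^ (2*m) + (sample_mean n y - c) ^ (2*m))"
    using power_even_diff_le[of "y 0 - c" "sample_mean n y - c" m] by simp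
  also have "\<dots> \<le> 4 ^ m / 2 * ((y 0 - c) ^ (2*m) + (\<Sum>j<n. (y j - c) ^ (2*m)) / real n)"
    using mean by (intro mult_left_mono add_left_mono) auto
  finally have d: "?d ^ (2*m) \<le> 4 ^ m / 2 * ((y 0 - c) ^ (2*m) + (\<Sum>j<n. (y j - c) ^ (2*m)) / real n)" .
  have "(standardize n y 0) ^ (2*m) = (?d\<^sup>2 / sample_var n y) ^ m"
    using assms by (simp add: standardize_def power_mult power_divide)
  also have "\<dots> \<le> (?d\<^sup>2 / v) ^ m"
    using assms by (intro power_mono divide_left_mono) auto
  also have "\<dots> = ?d ^ (2*m) / v ^ m" by (simp add: power_mult power_divide)
  also have "\<dots> \<le> 4 ^ m / 2 * ((y 0 - c) ^ (2*m) + (\<Sum>j<n. (y j - c) ^ (2*m)) / real n) / v ^ m"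
    using d assms(2) by (intro divide_right_mono) auto
  finally show ?thesis by (simp add: power_divide mult.commute)
qed

definition monomial4 :: "nat \<Rightarrow> nat \<Rightarrow> nat \<Rightarrow> nat \<Rightarrow> (nat \<Rightarrow> real) \<Rightarrow> real" where
  "monomial4 a b c d w = w 0 ^ a * w 1 ^ b * w 2 ^ c * w 3 ^ d"

lemma measurable_monomial4[measurable]:
  "monomial4 a b c d \<in> borel_measurable (Pi\<^sub>M UNIV (\<lambda>_. borel))"
  unfolding monomial4_def by measurable

lemma abs_monomial4_le:
  assumes "\<And>i. \<bar>w i\<bar> \<le> s"
  shows "\<bar>monomial4 a b c d w\<bar> \<le> s ^ (a + b + c + d)"
proof -
  have "\<bar>w i ^ e\<bar> \<le> s ^ e" for i e
    unfolding power_abs by (rule power_mono[OF assms abs_ge_zero])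
  moreover have "0 \<le> s" using assms[of 0] by linarith
  ultimately have "\<bar>monomial4 a b c d w\<bar> \<le> s ^ a * s ^ b * s ^ c * s ^ d"
    unfolding monomial4_def abs_mult by (intro mult_mono) auto
  then show ?thesis by (simp add: power_add)
qed

lemma monomial4_mult:
  "monomial4 a b c d w * w 0 = monomial4 (Suc a) b c d w"
  "monomial4 a b c d w * w 1 = monomial4 a (Suc b) c d w"
  "monomial4 a b c d w * w 2 = monomial4 a b (Suc c) d w"
  "monomial4 a b c d w * w 3 = monomial4 a b c (Suc d) w"
  "monomial4 a b c d w * (w 0)\<^sup>2 = monomial4 (a + 2) b c d w"
  "monomial4 a b c d w * (w 1)\<^sup>2 = monomial4 a (b + 2) c d w"
  by (simp_all add: monomial4_def power_add algebra_simps power2_eq_square)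

text \<open>The same rules with the indices written as they appear once a sum over {..<r} is unfolded.\<close>
lemma monomial4_mult_Suc:
  "monomial4 a b c d w * w (Suc 0) = monomial4 a (Suc b) c d w"
  "monomial4 a b c d w * w (Suc (Suc 0)) = monomial4 a b (Suc c) d w"
  "monomial4 a b c d w * w (Suc (Suc (Suc 0))) = monomial4 a b c (Suc d) w"
  "monomial4 a b c d w * (w (Suc 0))\<^sup>2 = monomial4 a (Suc (Suc b)) c d w"
  using monomial4_mult(2-4,6) by (simp_all add: numeral_2_eq_2 numeral_3_eq_3)

lemma monomial4_cong:
  assumes "\<And>i. i < r \<Longrightarrow> w i = w' i"
    and "a = 0 \<or> 0 < r" "b = 0 \<or> 1 < r" "c = 0 \<or> 2 < r" "d = 0 \<or> 3 < r"
  shows "monomial4 a b c d w = monomial4 a b c d w'"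
  using assms by (auto simp: monomial4_def)

section \<open>Chernoff bound and identically distributed variables\<close>

context prob_space
begin

lemma prob_sum_nonneg_le_power:
  fixes Y :: "'i \<Rightarrow> 'a \<Rightarrow> real"
  assumes "finite I" and ind: "indep_vars (\<lambda>_. borel) Y I" and "0 \<le> t" and "0 \<le> q"
    and mgf: "\<And>i. i \<in> I \<Longrightarrow> (\<integral>\<^sup>+\<omega>. ennreal (exp (t * Y i \<omega>)) \<partial>M) \<le> ennreal q"
  shows "prob {\<omega>\<in>space M. 0 \<le> (\<Sum>i\<in>I. Y i \<omega>)} \<le> q ^ card I"
proof -
  let ?S = "{\<omega>\<in>space M. 0 \<le> (\<Sum>i\<in>I. Y i \<omega>)}"
  have [measurable]: "\<And>i. i \<in> I \<Longrightarrow> Y i \<in> borel_measurable M"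
    using ind by (auto simp: indep_vars_def)
  have "?S \<in> sets M" using \<open>finite I\<close> by measurable
  then have "ennreal (prob ?S) = (\<integral>\<^sup>+\<omega>. indicator ?S \<omega> \<partial>M)"
    by (simp add: emeasure_eq_measure)
  also have "\<dots> \<le> (\<integral>\<^sup>+\<omega>. (\<Prod>i\<in>I. ennreal (exp (t * Y i \<omega>))) \<partial>M)"
  proof (intro nn_integral_mono)
    fix \<omega>
    have "(\<Prod>i\<in>I. ennreal (exp (t * Y i \<omega>))) = ennreal (exp (t * (\<Sum>i\<in>I. Y i \<omega>)))"
      using \<open>finite I\<close> by (simp add: prod_ennreal exp_sum sum_distrib_left)
    moreover have "\<omega> \<in> ?S \<Longrightarrow> 1 \<le> exp (t * (\<Sum>i\<in>I. Y i \<omega>))"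
      using \<open>0 \<le> t\<close> by simp
    ultimately show "indicator ?S \<omega> \<le> (\<Prod>i\<in>I. ennreal (exp (t * Y i \<omega>)))"
      by (cases "\<omega> \<in> ?S") auto
  qed
  also have "\<dots> = (\<Prod>i\<in>I. \<integral>\<^sup>+\<omega>. ennreal (exp (t * Y i \<omega>)) \<partial>M)"
    by (rule indep_vars_nn_integral[OF \<open>finite I\<close>]) (auto intro!: indep_vars_compose2[OF ind])
  also have "\<dots> \<le> (\<Prod>i\<in>I. ennreal q)"
    by (intro prod_mono_ennreal mgf)
  also have "\<dots> = ennreal (q ^ card I)"
    using \<open>0 \<le> q\<close> by (simp add: ennreal_power)
  finally show ?thesis using \<open>0 \<le> q\<close> by (simp add: ennreal_le_iff)
qed

lemma integral_eq_of_distr_eq: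
  assumes "X \<in> borel_measurable M" "Y \<in> borel_measurable M"
    and "distr M borel X = distr M borel Y" and "f \<in> borel_measurable borel"
  shows "(\<integral>\<omega>. f (X \<omega>) \<partial>M) = (\<integral>\<omega>. (f (Y \<omega>) :: real) \<partial>M)"
  using assms by (metis integral_distr)

end

section \<open>Exchangeability identities\<close>

locale iid_seq = prob_space +
  fixes X :: "nat \<Rightarrow> 'a \<Rightarrow> real"
  assumes random_variable[measurable]: "\<And>i. X i \<in> borel_measurable M"
    and indep: "indep_vars (\<lambda>_. borel) X UNIV"
    and identical: "\<And>i. distr M borel (X i) = distr M borel (X 0)"
begin

abbreviation Z :: "nat \<Rightarrow> 'a \<Rightarrow> nat \<Rightarrow> real" where
  "Z n \<omega> \<equiv> standardize n (\<lambda>j. X j \<omega>)"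

lemma measurable_Z[measurable]: "(\<lambda>\<omega>. Z n \<omega>) \<in> measurable M (Pi\<^sub>M UNIV (\<lambda>_. borel))"
proof -
  have "(\<lambda>\<omega>. standardize n (\<lambda>j\<in>{..<n}. X j \<omega>)) \<in> measurable M (Pi\<^sub>M UNIV (\<lambda>_. borel))"
    by measurable
  then show ?thesis by (simp add: standardize_restrict)
qed

lemma measurable_sample_var[measurable]:
  "(\<lambda>\<omega>. sample_var n (\<lambda>j. X j \<omega>)) \<in> borel_measurable M"
  unfolding sample_var_def sample_mean_def by measurable

lemma integrable_bounded_Z:
  fixes h :: "(nat \<Rightarrow> real) \<Rightarrow> real"
  assumes "h \<in> borel_measurable (Pi\<^sub>M UNIV (\<lambda>_. borel))" and "\<And>\<omega>. \<bar>h (Z n \<omega>)\<bar> \<le> B"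
  shows "integrable M (\<lambda>\<omega>. h (Z n \<omega>))"
  using assms by (intro integrable_const_bound[where B=B]) auto

lemma integral_permute_sample:
  assumes \<tau>: "\<tau> permutes {..<n}" and "0 < n"
    and g: "g \<in> borel_measurable (Pi\<^sub>M {..<n} (\<lambda>_. borel))"
  shows "(\<integral>\<omega>. g (\<lambda>i\<in>{..<n}. X (\<tau> i) \<omega>) \<partial>M) = (\<integral>\<omega>. (g (\<lambda>i\<in>{..<n}. X i \<omega>) :: real) \<partial>M)"
proof -
  let ?J = "{..<n}"
  let ?P = "Pi\<^sub>M ?J (\<lambda>_. borel :: real measure)"
  let ?Q = "Pi\<^sub>M ?J (\<lambda>_. distr M borel (X 0))"
  let ?Y = "\<lambda>\<omega>. \<lambda>i\<in>?J. X i \<omega>"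
  let ?r = "\<lambda>y. \<lambda>i\<in>?J. y (\<tau> i)"
  have \<tau>J: "\<And>i. i \<in> ?J \<Longrightarrow> \<tau> i \<in> ?J" using permutes_in_image[OF \<tau>] by blast
  have "distr M ?P ?Y = Pi\<^sub>M ?J (\<lambda>i. distr M borel (X i))"
    using indep_vars_iff_distr_eq_PiM[where M'="\<lambda>_. borel" and X=X and I="?J"] \<open>0 < n\<close>
      indep_vars_subset[OF indep, of ?J] by auto
  also have "\<dots> = ?Q" by (intro PiM_cong refl identical)
  finally have law: "distr M ?P ?Y = ?Q" .
  have sets_eq: "sets ?P = sets ?Q" by (intro sets_PiM_cong) auto
  have Y[measurable]: "?Y \<in> measurable M ?P" by measurable
  have rP: "?r \<in> measurable ?P ?P"
    using \<tau>J by (intro measurable_restrict measurable_component_singleton) auto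
  have rQ: "?r \<in> measurable ?Q ?Q" using rP by (simp add: measurable_cong_sets[OF sets_eq sets_eq])
  have gQ: "g \<in> borel_measurable ?Q" using g by (simp add: measurable_cong_sets[OF sets_eq refl])
  have invariant: "distr ?Q ?Q ?r = ?Q"
    using distr_PiM_reindex[of ?J "\<lambda>_. distr M borel (X 0)", OF _ permutes_inj_on[OF \<tau>]] \<tau>J
      prob_space_distr[OF random_variable] by auto
  have "(\<lambda>i\<in>?J. X (\<tau> i) \<omega>) = ?r (?Y \<omega>)" for \<omega> using \<tau>J by (auto simp: fun_eq_iff)
  then have "(\<integral>\<omega>. g (\<lambda>i\<in>?J. X (\<tau> i) \<omega>) \<partial>M) = (\<integral>y. g (?r y) \<partial>distr M ?P ?Y)"
    using integral_distr[OF Y measurable_compose[OF rP g]] by simp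
  also have "\<dots> = (\<integral>y. g y \<partial>distr ?Q ?Q ?r)"
    unfolding law by (rule integral_distr[symmetric, OF rQ gQ])
  also have "\<dots> = (\<integral>y. g y \<partial>distr M ?P ?Y)"
    unfolding invariant law ..
  also have "\<dots> = (\<integral>\<omega>. g (?Y \<omega>) \<partial>M)"
    by (rule integral_distr[OF Y g])
  finally show ?thesis .
qed

lemma integral_Z_permute:
  assumes \<tau>: "\<tau> permutes {..<n}" and "0 < n"
    and h[measurable]: "h \<in> borel_measurable (Pi\<^sub>M UNIV (\<lambda>_. borel))"
  shows "(\<integral>\<omega>. h (Z n \<omega> \<circ> \<tau>) \<partial>M) = (\<integral>\<omega>. (h (Z n \<omega>) :: real) \<partial>M)"
proof -
  have "Z n \<omega> \<circ> \<tau> = standardize n (\<lambda>i\<in>{..<n}. X (\<tau> i) \<omega>)" for \<omega>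
    using standardize_permute[OF \<tau>, of "\<lambda>j. X j \<omega>"]
    by (simp add: comp_def standardize_restrict)
  then have "(\<integral>\<omega>. h (Z n \<omega> \<circ> \<tau>) \<partial>M) = (\<integral>\<omega>. h (standardize n (\<lambda>i\<in>{..<n}. X (\<tau> i) \<omega>)) \<partial>M)"
    by simp
  also have "\<dots> = (\<integral>\<omega>. h (standardize n (\<lambda>i\<in>{..<n}. X i \<omega>)) \<partial>M)"
    by (intro integral_permute_sample[OF \<tau> \<open>0 < n\<close>]) measurable
  finally show ?thesis by (simp add: standardize_restrict)
qed

text \<open>If c(Z) only depends on Z_0, ..., Z_(r-1), exchangeability makes the terms j \<ge> r of
  E[c(Z) \<Sum>_j \<phi>(Z_j)] equal.\<close>
lemma exchangeable_sum_identity: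
  assumes "r < n"
    and c[measurable]: "c \<in> borel_measurable (Pi\<^sub>M UNIV (\<lambda>_. borel))"
    and c_local: "\<And>w w'. (\<And>i. i < r \<Longrightarrow> w i = w' i) \<Longrightarrow> c w = c w'"
    and c_bound: "\<And>\<omega>. \<bar>c (Z n \<omega>)\<bar> \<le> B"
    and \<phi>[measurable]: "\<phi> \<in> borel_measurable borel"
    and \<phi>_bound: "\<And>\<omega> j. \<bar>\<phi> (Z n \<omega> j)\<bar> \<le> B'"
    and sum_\<phi>: "AE \<omega> in M. (\<Sum>j<n. \<phi> (Z n \<omega> j)) = S"
  shows "(\<Sum>j<r. \<integral>\<omega>. c (Z n \<omega>) * \<phi> (Z n \<omega> j) \<partial>M)
      + real (n - r) * (\<integral>\<omega>. c (Z n \<omega>) * \<phi> (Z n \<omega> r) \<partial>M)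
    = S * (\<integral>\<omega>. c (Z n \<omega>) \<partial>M)"
proof -
  let ?E = "\<lambda>j. \<integral>\<omega>. c (Z n \<omega>) * \<phi> (Z n \<omega> j) \<partial>M"
  have int: "integrable M (\<lambda>\<omega>. c (Z n \<omega>) * \<phi> (Z n \<omega> j))" for j
  proof (rule integrable_bounded_Z[where B="B * B'"])
    show "\<bar>c (Z n \<omega>) * \<phi> (Z n \<omega> j)\<bar> \<le> B * B'" for \<omega>
      unfolding abs_mult
      by (intro mult_mono c_bound \<phi>_bound order_trans[OF abs_ge_zero c_bound] abs_ge_zero)
  qed measurable
  have swap: "?E j = ?E r" if "r \<le> j" "j < n" for j
  proof -
    let ?t = "Transposition.transpose r j"
    have "?t permutes {..<n}" using that \<open>r < n\<close> by (intro permutes_swap_id) auto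
    from integral_Z_permute[OF this _, of "\<lambda>w. c w * \<phi> (w r)"] that
    have "(\<integral>\<omega>. c (Z n \<omega> \<circ> ?t) * \<phi> ((Z n \<omega> \<circ> ?t) r) \<partial>M) = ?E r" by simp
    moreover have "c (Z n \<omega> \<circ> ?t) = c (Z n \<omega>)" for \<omega>
      using that by (intro c_local) (auto simp: transpose_def)
    ultimately show ?thesis by (simp add: transpose_def)
  qed
  have "(\<Sum>j<n. ?E j) = (\<integral>\<omega>. c (Z n \<omega>) * (\<Sum>j<n. \<phi> (Z n \<omega> j)) \<partial>M)"
    using int by (simp add: integral_sum sum_distrib_left)
  also have "\<dots> = (\<integral>\<omega>. S * c (Z n \<omega>) \<partial>M)"
  proof (rule integral_cong_AE)
    show "AE \<omega> in M. c (Z n \<omega>) * (\<Sum>j<n. \<phi> (Z n \<omega> j)) = S * c (Z n \<omega>)"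
      using sum_\<phi> by eventually_elim simp
  qed measurable
  also have "\<dots> = S * (\<integral>\<omega>. c (Z n \<omega>) \<partial>M)" by simp
  finally have total: "(\<Sum>j<n. ?E j) = S * (\<integral>\<omega>. c (Z n \<omega>) \<partial>M)" .
  have "(\<Sum>j<n. ?E j) = (\<Sum>j<r. ?E j) + (\<Sum>j\<in>{r..<n}. ?E j)"
    using sum.atLeastLessThan_concat[of 0 r n ?E] \<open>r < n\<close> by (simp add: lessThan_atLeast0)
  also have "(\<Sum>j\<in>{r..<n}. ?E j) = (\<Sum>j\<in>{r..<n}. ?E r)"
    by (rule sum.cong) (auto intro: swap)
  finally show ?thesis using total by simp
qed

definition mixed_moment :: "nat \<Rightarrow> nat \<Rightarrow> nat \<Rightarrow> nat \<Rightarrow> nat \<Rightarrow> real" where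
  "mixed_moment n a b c d = (\<integral>\<omega>. monomial4 a b c d (Z n \<omega>) \<partial>M)"

lemma abs_monomial4_Z_le: "\<bar>monomial4 a b c d (Z n \<omega>)\<bar> \<le> sqrt (real n) ^ (a + b + c + d)"
  by (intro abs_monomial4_le abs_standardize_le)

lemma integrable_monomial4_Z: "integrable M (\<lambda>\<omega>. monomial4 a b c d (Z n \<omega>))"
  by (rule integrable_bounded_Z[OF measurable_monomial4 abs_monomial4_Z_le])

lemma mixed_moment_transpose:
  assumes "i < n" "j < n"
    and "\<And>w. monomial4 a b c d (w \<circ> Transposition.transpose i j) = monomial4 a' b' c' d' w"
  shows "mixed_moment n a' b' c' d' = mixed_moment n a b c d"
proof -
  have "Transposition.transpose i j permutes {..<n}" using assms by (intro permutes_swap_id) auto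
  from integral_Z_permute[OF this _ measurable_monomial4[of a b c d]] assms show ?thesis
    by (simp add: mixed_moment_def)
qed

lemma centring_identity:
  assumes "r < n"
    and "a = 0 \<or> 0 < r" "b = 0 \<or> 1 < r" "c = 0 \<or> 2 < r" "d = 0 \<or> 3 < r"
  shows "(\<Sum>j<r. \<integral>\<omega>. monomial4 a b c d (Z n \<omega>) * Z n \<omega> j \<partial>M)
      + real (n - r) * (\<integral>\<omega>. monomial4 a b c d (Z n \<omega>) * Z n \<omega> r \<partial>M) = 0"
  using exchangeable_sum_identity[OF \<open>r < n\<close> measurable_monomial4
      monomial4_cong[OF _ assms(2-5)] abs_monomial4_Z_le, where \<phi>="\<lambda>x. x" and B'="sqrt (real n)" and S=0]
  by (simp add: abs_standardize_le sum_standardize)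

lemma normalisation_identity:
  assumes "r < n" and pos: "AE \<omega> in M. 0 < sample_var n (\<lambda>j. X j \<omega>)"
    and "a = 0 \<or> 0 < r" "b = 0 \<or> 1 < r" "c = 0 \<or> 2 < r" "d = 0 \<or> 3 < r"
  shows "(\<Sum>j<r. \<integral>\<omega>. monomial4 a b c d (Z n \<omega>) * (Z n \<omega> j)\<^sup>2 \<partial>M)
      + real (n - r) * (\<integral>\<omega>. monomial4 a b c d (Z n \<omega>) * (Z n \<omega> r)\<^sup>2 \<partial>M)
    = real n * mixed_moment n a b c d"
  unfolding mixed_moment_def
proof (rule exchangeable_sum_identity[OF \<open>r < n\<close> measurable_monomial4
      monomial4_cong[OF _ assms(3-6)] abs_monomial4_Z_le, where B'="real n"])
  show "AE \<omega> in M. (\<Sum>j<n. (Z n \<omega> j)\<^sup>2) = real n"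
    using pos by eventually_elim (rule sum_sq_standardize)
qed (auto simp: standardize_sq_le)

lemma centring_identity_1:
  "1 < n \<Longrightarrow> mixed_moment n (Suc a) 0 0 0 + real (n - 1) * mixed_moment n a 1 0 0 = 0"
  using centring_identity[of 1 n a 0 0 0]
  by (simp add: mixed_moment_def monomial4_mult monomial4_mult_Suc)

lemma centring_identity_2:
  "2 < n \<Longrightarrow> mixed_moment n (Suc a) b 0 0 + mixed_moment n a (Suc b) 0 0
      + real (n - 2) * mixed_moment n a b 1 0 = 0"
  using centring_identity[of 2 n a b 0 0]
  by (simp add: mixed_moment_def monomial4_mult monomial4_mult_Suc eval_nat_numeral)

lemma centring_identity_3:
  "3 < n \<Longrightarrow> mixed_moment n (Suc a) b c 0 + mixed_moment n a (Suc b) c 0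
      + mixed_moment n a b (Suc c) 0 + real (n - 3) * mixed_moment n a b c 1 = 0"
  using centring_identity[of 3 n a b c 0]
  by (simp add: mixed_moment_def monomial4_mult monomial4_mult_Suc eval_nat_numeral add.assoc)

lemma mixed_moment_0: "mixed_moment n 0 0 0 0 = 1"
  by (simp add: mixed_moment_def monomial4_def prob_space)

lemma second_moment:
  assumes "0 < n" and pos: "AE \<omega> in M. 0 < sample_var n (\<lambda>j. X j \<omega>)"
  shows "mixed_moment n 2 0 0 0 = 1"
  using normalisation_identity[OF assms, of 0 0 0 0] assms(1)
  by (simp add: mixed_moment_def monomial4_mult mixed_moment_0[unfolded mixed_moment_def])
    (simp add: numeral_2_eq_2)

lemma normalisation_identity_1:
  assumes "1 < n" and pos: "AE \<omega> in M. 0 < sample_var n (\<lambda>j. X j \<omega>)"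
  shows "mixed_moment n (a + 2) 0 0 0 + real (n - 1) * mixed_moment n a 2 0 0
    = real n * mixed_moment n a 0 0 0"
  using normalisation_identity[OF assms, of a 0 0 0]
  by (simp add: mixed_moment_def monomial4_mult monomial4_mult_Suc) (simp add: numeral_2_eq_2)

lemma cross_moment:
  assumes "2 \<le> n" and pos: "AE \<omega> in M. 0 < sample_var n (\<lambda>j. X j \<omega>)"
  shows "mixed_moment n 1 1 0 0 = - 1 / (real n - 1)"
proof -
  have "1 + (real n - 1) * mixed_moment n 1 1 0 0 = 0"
    using centring_identity_1[of n 1] second_moment[OF _ pos] assms(1)
    by (simp add: of_nat_diff numeral_2_eq_2)
  then show ?thesis using assms(1) by (simp add: field_simps)
qed

lemma even_mixed_moment_nonneg: "0 \<le> mixed_moment n (2*m) 0 0 0"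
  unfolding mixed_moment_def monomial4_def
  by (intro integral_nonneg_AE) (simp add: zero_le_even_power)

lemma abs_mixed_moment_le:
  assumes "1 < n"
  shows "\<bar>mixed_moment n a b 0 0\<bar> \<le> (mixed_moment n (2*a) 0 0 0 + mixed_moment n (2*b) 0 0 0) / 2"
proof -
  have "\<bar>monomial4 a b 0 0 w\<bar> \<le> (monomial4 (2*a) 0 0 0 w + monomial4 0 (2*b) 0 0 w) / 2" for w
    using abs_mult_le_half_sum_sq[of "w 0 ^ a" "w 1 ^ b"]
    by (simp add: monomial4_def power_mult mult.commute)
  then have "\<bar>mixed_moment n a b 0 0\<bar>
      \<le> (\<integral>\<omega>. (monomial4 (2*a) 0 0 0 (Z n \<omega>) + monomial4 0 (2*b) 0 0 (Z n \<omega>)) / 2 \<partial>M)"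
    unfolding mixed_moment_def
    by (intro order_trans[OF integral_abs_bound] integral_mono) (auto simp: integrable_monomial4_Z)
  also have "\<dots> = (mixed_moment n (2*a) 0 0 0 + mixed_moment n 0 (2*b) 0 0) / 2"
    by (simp add: mixed_moment_def integrable_monomial4_Z)
  also have "mixed_moment n 0 (2*b) 0 0 = mixed_moment n (2*b) 0 0 0"
    using assms by (intro mixed_moment_transpose[of 0 n 1]) (auto simp: monomial4_def transpose_def)
  finally show ?thesis .
qed

lemma centring_bound_1:
  assumes "4 \<le> n"
  shows "\<bar>mixed_moment n a 1 0 0\<bar> \<le> 4 * \<bar>mixed_moment n (Suc a) 0 0 0\<bar> / real n"
  using centring_identity_1[of n a] assms
  by (intro abs_le_of_diff_mult_eq[where r=1 and t="- mixed_moment n (Suc a) 0 0 0"]) auto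

lemma centring_bound_2:
  assumes "4 \<le> n"
  shows "\<bar>mixed_moment n a b 1 0\<bar>
    \<le> 4 * (\<bar>mixed_moment n (Suc a) b 0 0\<bar> + \<bar>mixed_moment n a (Suc b) 0 0\<bar>) / real n"
  using centring_identity_2[of n a b] assms
  by (intro abs_le_of_diff_mult_eq[where r=2 and t="- mixed_moment n (Suc a) b 0 0 - mixed_moment n a (Suc b) 0 0"])
    (auto simp: algebra_simps)

lemma centring_bound_3:
  assumes "4 \<le> n"
  shows "\<bar>mixed_moment n a b c 1\<bar> \<le> 4 * (\<bar>mixed_moment n (Suc a) b c 0\<bar>
    + \<bar>mixed_moment n a (Suc b) c 0\<bar> + \<bar>mixed_moment n a b (Suc c) 0\<bar>) / real n"
  using centring_identity_3[of n a b c] assms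
  by (intro abs_le_of_diff_mult_eq[where r=3 and t="- mixed_moment n (Suc a) b c 0
      - mixed_moment n a (Suc b) c 0 - mixed_moment n a b (Suc c) 0"]) (auto simp: algebra_simps)

lemma mixed_moment_bounds_order4:
  assumes n: "4 \<le> n" and B: "mixed_moment n 4 0 0 0 \<le> B"
  shows "\<bar>mixed_moment n 3 1 0 0\<bar> \<le> 4 * B / real n"
    and "\<bar>mixed_moment n 2 1 1 0\<bar> \<le> 8 * B / real n"
    and "\<bar>mixed_moment n 1 1 1 1\<bar> \<le> 96 * B / (real n)\<^sup>2"
proof -
  have m4: "\<bar>mixed_moment n 4 0 0 0\<bar> \<le> B" using even_mixed_moment_nonneg[of n 2] B by simp
  then have "4 * B / real n \<le> B"
    using n mult_left_mono[of 4 "real n" B] by (simp add: field_simps)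
  show m31: "\<bar>mixed_moment n 3 1 0 0\<bar> \<le> 4 * B / real n"
    using m4 n by (intro order_trans[OF centring_bound_1[OF n, of 3]]) (simp add: divide_right_mono)
  have "\<bar>mixed_moment n 2 2 0 0\<bar> \<le> B"
    using abs_mixed_moment_le[of n 2 2] n B by simp
  then show m211: "\<bar>mixed_moment n 2 1 1 0\<bar> \<le> 8 * B / real n"
    using m31 \<open>4 * B / real n \<le> B\<close>
    by (intro order_trans[OF centring_bound_2[OF n, of 2 1]] divide_right_mono) (auto simp: eval_nat_numeral)
  have "mixed_moment n 1 2 1 0 = mixed_moment n 2 1 1 0" "mixed_moment n 1 1 2 0 = mixed_moment n 2 1 1 0"
    using n mixed_moment_transpose[of 0 n 1 2 1 1 0] mixed_moment_transpose[of 0 n 2 2 1 1 0]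
    by (auto simp: monomial4_def transpose_def)
  then have "\<bar>mixed_moment n 1 1 1 1\<bar> \<le> 4 * (3 * (8 * B / real n)) / real n"
    using m211 by (intro order_trans[OF centring_bound_3[OF n, of 1 1 1]] divide_right_mono)
      (auto simp: eval_nat_numeral)
  then show "\<bar>mixed_moment n 1 1 1 1\<bar> \<le> 96 * B / (real n)\<^sup>2"
    by (simp add: power2_eq_square field_simps)
qed

lemma mixed_moment_bounds_order6:
  assumes n: "4 \<le> n" and B: "mixed_moment n 4 0 0 0 \<le> B" "mixed_moment n 6 0 0 0 \<le> B"
    "mixed_moment n 8 0 0 0 \<le> B"
  shows "\<bar>mixed_moment n 5 1 0 0\<bar> \<le> 4 * B / real n"
    and "\<bar>mixed_moment n 3 3 0 0\<bar> \<le> B"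
    and "\<bar>mixed_moment n 4 2 0 0\<bar> \<le> B"
    and "\<bar>mixed_moment n 4 1 1 0\<bar> \<le> 8 * B / real n"
    and "\<bar>mixed_moment n 3 2 1 0\<bar> \<le> 8 * B / real n"
    and "\<bar>mixed_moment n 3 1 1 1\<bar> \<le> 96 * B / (real n)\<^sup>2"
proof -
  have m6: "\<bar>mixed_moment n 6 0 0 0\<bar> \<le> B" using even_mixed_moment_nonneg[of n 3] B by simp
  then have "4 * B / real n \<le> B"
    using n mult_left_mono[of 4 "real n" B] by (simp add: field_simps)
  show m51: "\<bar>mixed_moment n 5 1 0 0\<bar> \<le> 4 * B / real n"
    using m6 n by (intro order_trans[OF centring_bound_1[OF n, of 5]]) (simp add: divide_right_mono)
  show m33: "\<bar>mixed_moment n 3 3 0 0\<bar> \<le> B"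
    using abs_mixed_moment_le[of n 3 3] n B by simp
  show m42: "\<bar>mixed_moment n 4 2 0 0\<bar> \<le> B"
    using abs_mixed_moment_le[of n 4 2] n B by simp
  show m411: "\<bar>mixed_moment n 4 1 1 0\<bar> \<le> 8 * B / real n"
    using m51 m42 \<open>4 * B / real n \<le> B\<close>
    by (intro order_trans[OF centring_bound_2[OF n, of 4 1]] divide_right_mono) (auto simp: eval_nat_numeral)
  show m321: "\<bar>mixed_moment n 3 2 1 0\<bar> \<le> 8 * B / real n"
    using m42 m33
    by (intro order_trans[OF centring_bound_2[OF n, of 3 2]] divide_right_mono) (auto simp: eval_nat_numeral)
  have "mixed_moment n 3 1 2 0 = mixed_moment n 3 2 1 0"
    using n by (intro mixed_moment_transpose[of 1 n 2]) (auto simp: monomial4_def transpose_def)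
  then have "\<bar>mixed_moment n 3 1 1 1\<bar> \<le> 4 * (3 * (8 * B / real n)) / real n"
    using m411 m321 by (intro order_trans[OF centring_bound_3[OF n, of 3 1 1]] divide_right_mono)
      (auto simp: eval_nat_numeral)
  then show "\<bar>mixed_moment n 3 1 1 1\<bar> \<le> 96 * B / (real n)\<^sup>2"
    by (simp add: power2_eq_square field_simps)
qed

lemma mixed_moment_2_2_near_1:
  assumes n: "2 \<le> n" and pos: "AE \<omega> in M. 0 < sample_var n (\<lambda>j. X j \<omega>)"
    and B: "mixed_moment n 4 0 0 0 \<le> B"
  shows "\<bar>mixed_moment n 2 2 0 0 - 1\<bar> \<le> (1 + B) / (real n - 1)"
proof -
  have "mixed_moment n 4 0 0 0 + (real n - 1) * mixed_moment n 2 2 0 0 = real n"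
    using normalisation_identity_1[OF _ pos, of 2] second_moment[OF _ pos] n
    by (simp add: of_nat_diff)
  then have "mixed_moment n 2 2 0 0 - 1 = (1 - mixed_moment n 4 0 0 0) / (real n - 1)"
    using n by (simp add: field_simps)
  moreover have "\<bar>1 - mixed_moment n 4 0 0 0\<bar> \<le> 1 + B"
    using even_mixed_moment_nonneg[of n 2] B by simp
  ultimately show ?thesis
    using n by (simp add: abs_divide divide_right_mono)
qed

end

section \<open>Uniform moment bounds\<close>

locale iid_exp_moments = iid_seq +
  fixes \<mu> t0 Cb \<delta> :: real
  assumes mean: "\<mu> = (\<integral>\<omega>. X 0 \<omega> \<partial>M)"
    and t0_pos: "0 < t0" and Cb_pos: "0 < Cb" and \<delta>_pos: "0 < \<delta>"
    and mgf: "\<And>i s. \<bar>s\<bar> = t0 \<Longrightarrow> (\<integral>\<^sup>+\<omega>. ennreal (exp (s * (X i \<omega> - \<mu>))) \<partial>M) \<le> ennreal Cb"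
    and variance: "\<delta> \<le> (\<integral>\<omega>. (X 0 \<omega> - \<mu>)\<^sup>2 \<partial>M)"
begin

lemma integrable_mgf: "\<bar>s\<bar> = t0 \<Longrightarrow> integrable M (\<lambda>\<omega>. exp (s * (X i \<omega> - \<mu>)))"
  using mgf[of s i] by (intro integrableI_nonneg) (auto simp: top.not_eq_extremum le_less_trans)

lemma integral_mgf_le: "\<bar>s\<bar> = t0 \<Longrightarrow> (\<integral>\<omega>. exp (s * (X i \<omega> - \<mu>)) \<partial>M) \<le> Cb"
  using mgf[of s i] nn_integral_eq_integral[OF integrable_mgf[of s i]] Cb_pos by simp

lemma integrable_exp_abs_centred: "integrable M (\<lambda>\<omega>. exp (t0 * \<bar>X i \<omega> - \<mu>\<bar>))"
  and integral_exp_abs_centred_le: "(\<integral>\<omega>. exp (t0 * \<bar>X i \<omega> - \<mu>\<bar>) \<partial>M) \<le> 2 * Cb"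
proof -
  let ?f = "\<lambda>\<omega>. exp (t0 * (X i \<omega> - \<mu>)) + exp (- t0 * (X i \<omega> - \<mu>))"
  have f: "integrable M ?f" using integrable_mgf[of t0 i] integrable_mgf[of "- t0" i] t0_pos by simp
  have "exp \<bar>x\<bar> \<le> exp x + exp (- x)" for x :: real
    by (cases "0 \<le> x") (auto simp: add_increasing add_increasing2)
  then have le: "exp (t0 * \<bar>X i \<omega> - \<mu>\<bar>) \<le> ?f \<omega>" for \<omega>
    using t0_pos by (metis abs_mult abs_of_pos mult_minus_left)
  show int: "integrable M (\<lambda>\<omega>. exp (t0 * \<bar>X i \<omega> - \<mu>\<bar>))"
    using le by (intro Bochner_Integration.integrable_bound[OF f]) (auto intro!: AE_I2)
  have "(\<integral>\<omega>. exp (t0 * \<bar>X i \<omega> - \<mu>\<bar>) \<partial>M) \<le> (\<integral>\<omega>. ?f \<omega> \<partial>M)"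
    using int f le by (rule integral_mono)
  also have "\<dots> \<le> 2 * Cb"
    using integrable_mgf[of t0 i] integrable_mgf[of "- t0" i] integral_mgf_le[of t0 i]
      integral_mgf_le[of "- t0" i] t0_pos by simp
  finally show "(\<integral>\<omega>. exp (t0 * \<bar>X i \<omega> - \<mu>\<bar>) \<partial>M) \<le> 2 * Cb" .
qed

definition centred_moment_bound :: "nat \<Rightarrow> real" where
  "centred_moment_bound m = fact (2*m) / t0 ^ (2*m) * (2 * Cb)"

lemma centred_moment_bound_pos: "0 < centred_moment_bound m"
  using t0_pos Cb_pos by (simp add: centred_moment_bound_def)

lemma integrable_centred_power_even: "integrable M (\<lambda>\<omega>. (X i \<omega> - \<mu>) ^ (2*m))"
  and centred_moment_le: "(\<integral>\<omega>. (X i \<omega> - \<mu>) ^ (2*m) \<partial>M) \<le> centred_moment_bound m"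
proof -
  let ?g = "\<lambda>\<omega>. fact (2*m) / t0 ^ (2*m) * exp (t0 * \<bar>X i \<omega> - \<mu>\<bar>)"
  have g: "integrable M ?g" using integrable_exp_abs_centred by simp
  have le: "(X i \<omega> - \<mu>) ^ (2*m) \<le> ?g \<omega>" for \<omega>
    using power_even_le_exp_abs[OF t0_pos] .
  show int: "integrable M (\<lambda>\<omega>. (X i \<omega> - \<mu>) ^ (2*m))"
    using le by (intro Bochner_Integration.integrable_bound[OF g])
      (auto intro!: AE_I2 simp: zero_le_even_power order_trans[OF _ le])
  have "(\<integral>\<omega>. (X i \<omega> - \<mu>) ^ (2*m) \<partial>M) \<le> (\<integral>\<omega>. ?g \<omega> \<partial>M)"
    using int g le by (rule integral_mono)
  also have "\<dots> = fact (2*m) / t0 ^ (2*m) * (\<integral>\<omega>. exp (t0 * \<bar>X i \<omega> - \<mu>\<bar>) \<partial>M)"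
    by simp
  also have "\<dots> \<le> centred_moment_bound m"
    unfolding centred_moment_bound_def
    using integral_exp_abs_centred_le[of i] t0_pos by (intro mult_left_mono) auto
  finally show "(\<integral>\<omega>. (X i \<omega> - \<mu>) ^ (2*m) \<partial>M) \<le> centred_moment_bound m" .
qed

lemma integrable_centred: "integrable M (\<lambda>\<omega>. X i \<omega> - \<mu>)"
proof (rule Bochner_Integration.integrable_bound)
  show "integrable M (\<lambda>\<omega>. exp (t0 * \<bar>X i \<omega> - \<mu>\<bar>) / t0)"
    using integrable_exp_abs_centred by simp
  show "AE \<omega> in M. norm (X i \<omega> - \<mu>) \<le> norm (exp (t0 * \<bar>X i \<omega> - \<mu>\<bar>) / t0)"
    using power_le_fact_mult_exp[of "t0 * \<bar>X i _ - \<mu>\<bar>" 1] t0_pos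
    by (intro AE_I2) (simp add: field_simps abs_mult)
qed measurable

lemma integral_centred: "(\<integral>\<omega>. X i \<omega> - \<mu> \<partial>M) = 0"
proof -
  have "(\<integral>\<omega>. X i \<omega> \<partial>M) = \<mu>"
    using integral_eq_of_distr_eq[OF random_variable random_variable identical, of "\<lambda>x. x" i] mean
    by simp
  moreover have "integrable M (X i)"
    using Bochner_Integration.integrable_add[OF integrable_centred[of i] integrable_const[of \<mu>]] by simp
  ultimately show ?thesis by (simp add: prob_space)
qed

lemma variance_ge: "\<delta> \<le> (\<integral>\<omega>. (X i \<omega> - \<mu>)\<^sup>2 \<partial>M)"
  using integral_eq_of_distr_eq[OF random_variable random_variable identical, of "\<lambda>x. (x - \<mu>)\<^sup>2" i]
    variance by simp

definition var_tail_rate :: real where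
  "var_tail_rate = \<delta>\<^sup>2 / (64 * centred_moment_bound 2)"

lemma var_tail_rate_pos: "0 < var_tail_rate"
  using \<delta>_pos centred_moment_bound_pos[of 2] by (simp add: var_tail_rate_def)

lemma integral_exp_neg_sq_centred_le:
  assumes "0 \<le> t"
  shows "(\<integral>\<omega>. exp (- (t * (X i \<omega> - \<mu>)\<^sup>2)) \<partial>M) \<le> exp (- t * \<delta> + t\<^sup>2 * centred_moment_bound 2)"
proof -
  let ?W2 = "\<lambda>\<omega>. (X i \<omega> - \<mu>)\<^sup>2"
  have int: "integrable M (\<lambda>\<omega>. exp (- (t * ?W2 \<omega>)))"
    using assms by (intro integrable_const_bound[where B=1]) auto
  have int2: "integrable M ?W2" and int4: "integrable M (\<lambda>\<omega>. (X i \<omega> - \<mu>) ^ 4)"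
    using integrable_centred_power_even[of i 1] integrable_centred_power_even[of i 2] by simp_all
  have "exp (- (t * ?W2 \<omega>)) \<le> 1 - t * ?W2 \<omega> + t\<^sup>2 * (X i \<omega> - \<mu>) ^ 4" for \<omega>
    using exp_minus_le_quadratic[of "t * ?W2 \<omega>"] assms
    by (simp add: power_mult_distrib flip: power_mult)
  then have "(\<integral>\<omega>. exp (- (t * ?W2 \<omega>)) \<partial>M) \<le> (\<integral>\<omega>. 1 - t * ?W2 \<omega> + t\<^sup>2 * (X i \<omega> - \<mu>) ^ 4 \<partial>M)"
    using int int2 int4 by (intro integral_mono) auto
  also have "\<dots> = 1 - t * (\<integral>\<omega>. ?W2 \<omega> \<partial>M) + t\<^sup>2 * (\<integral>\<omega>. (X i \<omega> - \<mu>) ^ 4 \<partial>M)"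
    using int2 int4 by (simp add: prob_space)
  also have "\<dots> \<le> 1 - t * \<delta> + t\<^sup>2 * centred_moment_bound 2"
    using variance_ge[of i] centred_moment_le[of i 2] assms
    by (intro add_mono diff_mono mult_left_mono) auto
  also have "\<dots> \<le> exp (- t * \<delta> + t\<^sup>2 * centred_moment_bound 2)"
    using exp_ge_add_one_self[of "- t * \<delta> + t\<^sup>2 * centred_moment_bound 2"] by (simp add: algebra_simps)
  finally show ?thesis .
qed

lemma mgf_variance_deficit:
  "\<exists>t\<ge>0. \<forall>i. (\<integral>\<^sup>+\<omega>. ennreal (exp (t * (3 * \<delta> / 4 - (X i \<omega> - \<mu>)\<^sup>2))) \<partial>M)
    \<le> ennreal (exp (- var_tail_rate))"
proof -
  define K where "K = centred_moment_bound 2"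
  define t where "t = \<delta> / (8 * K)"
  have K: "0 < K" and t: "0 < t"
    using centred_moment_bound_pos \<delta>_pos by (auto simp: K_def t_def)
  have eq: "exp (t * (3 * \<delta> / 4 - (X i \<omega> - \<mu>)\<^sup>2))
      = exp (t * (3 * \<delta> / 4)) * exp (- (t * (X i \<omega> - \<mu>)\<^sup>2))" for i \<omega>
    by (simp add: algebra_simps flip: exp_add)
  have "exp (t * (3 * \<delta> / 4)) * (\<integral>\<omega>. exp (- (t * (X i \<omega> - \<mu>)\<^sup>2)) \<partial>M)
      \<le> exp (t * (3 * \<delta> / 4)) * exp (- t * \<delta> + t\<^sup>2 * K)" for i
    using integral_exp_neg_sq_centred_le[of t i] t by (intro mult_left_mono) (auto simp: K_def)
  also have "\<dots> = exp (- var_tail_rate)"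
    using K by (simp add: var_tail_rate_def t_def K_def power2_eq_square field_simps flip: exp_add)
  finally have "(\<integral>\<^sup>+\<omega>. ennreal (exp (t * (3 * \<delta> / 4 - (X i \<omega> - \<mu>)\<^sup>2))) \<partial>M)
      \<le> ennreal (exp (- var_tail_rate))" for i
    unfolding eq using t by (subst nn_integral_eq_integral) (auto intro!: integrable_const_bound[where B=1])
  with t show ?thesis by (intro exI[of _ t]) auto
qed

definition mean_chernoff_param :: real where
  "mean_chernoff_param = min (t0 / 2) (sqrt \<delta> * t0\<^sup>2 / (64 * Cb))"

definition mean_tail_rate :: real where
  "mean_tail_rate = mean_chernoff_param * sqrt \<delta> / 4"

lemma mean_tail_rate_pos: "0 < mean_tail_rate"
  using t0_pos Cb_pos \<delta>_pos by (simp add: mean_tail_rate_def mean_chernoff_param_def)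

lemma integrable_exp_centred:
  assumes "0 \<le> s" and "s \<le> t0" and "\<bar>sg\<bar> = 1"
  shows "integrable M (\<lambda>\<omega>. exp (s * (sg * (X i \<omega> - \<mu>))))"
proof (rule Bochner_Integration.integrable_bound[OF integrable_exp_abs_centred[of i]])
  have "s * (sg * (X i \<omega> - \<mu>)) \<le> t0 * \<bar>X i \<omega> - \<mu>\<bar>" for \<omega>
  proof -
    have "s * (sg * (X i \<omega> - \<mu>)) \<le> s * \<bar>sg * (X i \<omega> - \<mu>)\<bar>" using assms by (intro mult_left_mono) auto
    also have "\<dots> \<le> t0 * \<bar>X i \<omega> - \<mu>\<bar>" using assms by (simp add: abs_mult mult_right_mono)
    finally show ?thesis .
  qed
  then show "AE \<omega> in M. norm (exp (s * (sg * (X i \<omega> - \<mu>)))) \<le> norm (exp (t0 * \<bar>X i \<omega> - \<mu>\<bar>))"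
    by (intro AE_I2) simp
qed measurable

lemma integral_exp_centred_le:
  assumes "0 \<le> s" and "2 * s \<le> t0" and "\<bar>sg\<bar> = 1"
  shows "(\<integral>\<omega>. exp (s * (sg * (X i \<omega> - \<mu>))) \<partial>M) \<le> exp (s\<^sup>2 * (16 * Cb / t0\<^sup>2))"
proof -
  let ?W = "\<lambda>\<omega>. sg * (X i \<omega> - \<mu>)"
  let ?q = "\<lambda>\<omega>. 1 + s * ?W \<omega> + s\<^sup>2 * (8 / t0\<^sup>2 * exp (t0 * \<bar>X i \<omega> - \<mu>\<bar>))"
  have "exp (s * ?W \<omega>) \<le> ?q \<omega>" for \<omega>
    using exp_le_quadratic_exp_abs[of s t0 "?W \<omega>"] assms t0_pos by (simp add: abs_mult)
  moreover have "integrable M ?q"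
    using integrable_centred[of i] integrable_exp_abs_centred[of i] by simp
  ultimately have "(\<integral>\<omega>. exp (s * ?W \<omega>) \<partial>M) \<le> (\<integral>\<omega>. ?q \<omega> \<partial>M)"
    using integrable_exp_centred[of s sg i] assms t0_pos by (intro integral_mono) auto
  also have "\<dots> = 1 + s\<^sup>2 * (8 / t0\<^sup>2 * (\<integral>\<omega>. exp (t0 * \<bar>X i \<omega> - \<mu>\<bar>) \<partial>M))"
    using integrable_centred[of i] integrable_exp_abs_centred[of i] integral_centred[of i]
    by (simp add: prob_space)
  also have "\<dots> \<le> 1 + s\<^sup>2 * (8 / t0\<^sup>2 * (2 * Cb))"
    using integral_exp_abs_centred_le[of i] by (intro add_left_mono mult_left_mono) auto
  also have "\<dots> \<le> exp (s\<^sup>2 * (16 * Cb / t0\<^sup>2))"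
    using exp_ge_add_one_self[of "s\<^sup>2 * (16 * Cb / t0\<^sup>2)"] by simp
  finally show ?thesis .
qed

lemma mgf_mean_excess:
  "\<exists>s\<ge>0. \<forall>i sg. \<bar>sg\<bar> = 1 \<longrightarrow>
    (\<integral>\<^sup>+\<omega>. ennreal (exp (s * (sg * (X i \<omega> - \<mu>) - sqrt \<delta> / 2))) \<partial>M)
      \<le> ennreal (exp (- mean_tail_rate))"
proof -
  define s where "s = mean_chernoff_param"
  define K where "K = 16 * Cb / t0\<^sup>2"
  have s: "0 < s" "2 * s \<le> t0"
    using t0_pos Cb_pos \<delta>_pos by (auto simp: s_def mean_chernoff_param_def)
  have "s * K \<le> sqrt \<delta> * t0\<^sup>2 / (64 * Cb) * K"
    using Cb_pos by (intro mult_right_mono) (auto simp: s_def K_def mean_chernoff_param_def)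
  then have sK: "s * K \<le> sqrt \<delta> / 4"
    using t0_pos Cb_pos by (simp add: K_def)
  have eq: "exp (s * (sg * (X i \<omega> - \<mu>) - sqrt \<delta> / 2))
      = exp (- (s * sqrt \<delta> / 2)) * exp (s * (sg * (X i \<omega> - \<mu>)))" for i sg \<omega>
    by (simp add: algebra_simps flip: exp_add)
  have "exp (- (s * sqrt \<delta> / 2)) * (\<integral>\<omega>. exp (s * (sg * (X i \<omega> - \<mu>))) \<partial>M)
      \<le> exp (- (s * sqrt \<delta> / 2)) * exp (s\<^sup>2 * K)" if "\<bar>sg\<bar> = 1" for i sg
    using integral_exp_centred_le[of s sg i] s that by (intro mult_left_mono) (auto simp: K_def)
  also have "\<dots> \<le> exp (- mean_tail_rate)"
    using sK s by (simp add: mean_tail_rate_def s_def power2_eq_square field_simps flip: exp_add)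
  finally have "(\<integral>\<^sup>+\<omega>. ennreal (exp (s * (sg * (X i \<omega> - \<mu>) - sqrt \<delta> / 2))) \<partial>M)
      \<le> ennreal (exp (- mean_tail_rate))" if "\<bar>sg\<bar> = 1" for i sg
    unfolding eq using integrable_exp_centred[of s sg i] s that
    by (subst nn_integral_eq_integral) auto
  with s show ?thesis by (intro exI[of _ s]) auto
qed

lemma prob_sample_var_small:
  assumes "0 < n"
  shows "prob {\<omega>\<in>space M. sample_var n (\<lambda>j. X j \<omega>) < \<delta> / 2}
    \<le> exp (- var_tail_rate) ^ n + 2 * exp (- mean_tail_rate) ^ n"
proof -
  have indep_n: "indep_vars (\<lambda>_. borel) X {..<n}" by (rule indep_vars_subset[OF indep]) auto
  obtain t where "0 \<le> t" and t: "\<And>i. (\<integral>\<^sup>+\<omega>. ennreal (exp (t * (3 * \<delta> / 4 - (X i \<omega> - \<mu>)\<^sup>2))) \<partial>M)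
      \<le> ennreal (exp (- var_tail_rate))"
    using mgf_variance_deficit by blast
  obtain s where "0 \<le> s" and s: "\<And>i sg. \<bar>sg\<bar> = 1 \<Longrightarrow>
      (\<integral>\<^sup>+\<omega>. ennreal (exp (s * (sg * (X i \<omega> - \<mu>) - sqrt \<delta> / 2))) \<partial>M) \<le> ennreal (exp (- mean_tail_rate))"
    using mgf_mean_excess by blast
  define E where "E = {\<omega>\<in>space M. 0 \<le> (\<Sum>j<n. 3 * \<delta> / 4 - (X j \<omega> - \<mu>)\<^sup>2)}"
  define F where "F sg = {\<omega>\<in>space M. 0 \<le> (\<Sum>j<n. sg * (X j \<omega> - \<mu>) - sqrt \<delta> / 2)}" for sg :: real
  have [measurable]: "E \<in> events" "F sg \<in> events" for sg
    unfolding E_def F_def by measurable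
  have prob_E: "prob E \<le> exp (- var_tail_rate) ^ n"
    using prob_sum_nonneg_le_power[OF _ _ \<open>0 \<le> t\<close> _ t, of "{..<n}"] \<open>0 \<le> t\<close>
      indep_vars_compose2[OF indep_n, of "\<lambda>j x. 3 * \<delta> / 4 - (x - \<mu>)\<^sup>2"]
    by (simp add: E_def)
  have prob_F: "prob (F sg) \<le> exp (- mean_tail_rate) ^ n" if "\<bar>sg\<bar> = 1" for sg
    using prob_sum_nonneg_le_power[OF _ _ \<open>0 \<le> s\<close> _ s[OF that], of "{..<n}"]
      indep_vars_compose2[OF indep_n, of "\<lambda>j x. sg * (x - \<mu>) - sqrt \<delta> / 2"]
    by (simp add: F_def)
  have "{\<omega>\<in>space M. sample_var n (\<lambda>j. X j \<omega>) < \<delta> / 2} \<subseteq> E \<union> F 1 \<union> F (-1)"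
    using small_sample_var_cases[OF assms \<delta>_pos, of "\<lambda>j. X j _" \<mu>] by (auto simp: E_def F_def)
  then have "prob {\<omega>\<in>space M. sample_var n (\<lambda>j. X j \<omega>) < \<delta> / 2} \<le> prob (E \<union> F 1 \<union> F (-1))"
    by (intro finite_measure_mono) auto
  also have "\<dots> \<le> prob E + prob (F 1) + prob (F (-1))"
    by (intro order_trans[OF measure_subadditive] add_right_mono measure_subadditive) auto
  finally show ?thesis using prob_E prob_F[of 1] prob_F[of "-1"] by simp
qed

definition std_moment_bound :: "nat \<Rightarrow> real" where
  "std_moment_bound m = (8 / \<delta>) ^ m * centred_moment_bound m
    + fact m / var_tail_rate ^ m + 2 * (fact m / mean_tail_rate ^ m)"

lemma Z_power_le:
  assumes "0 < n" and "\<omega> \<in> space M"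
  shows "Z n \<omega> 0 ^ (2*m) \<le> (8 / \<delta>) ^ m / 2
      * ((X 0 \<omega> - \<mu>) ^ (2*m) + (\<Sum>j<n. (X j \<omega> - \<mu>) ^ (2*m)) / real n)
    + real n ^ m * indicator {\<omega>\<in>space M. sample_var n (\<lambda>j. X j \<omega>) < \<delta> / 2} \<omega>"
proof (cases "sample_var n (\<lambda>j. X j \<omega>) < \<delta> / 2")
  case True
  have "Z n \<omega> 0 ^ (2*m) \<le> real n ^ m"
    unfolding power_mult by (intro power_mono standardize_sq_le) auto
  moreover have "0 \<le> (8 / \<delta>) ^ m / 2 * ((X 0 \<omega> - \<mu>) ^ (2*m) + (\<Sum>j<n. (X j \<omega> - \<mu>) ^ (2*m)) / real n)"
    using \<delta>_pos by (intro mult_nonneg_nonneg add_nonneg_nonneg divide_nonneg_nonneg sum_nonneg)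
      (auto simp: zero_le_even_power)
  moreover have "indicator {\<omega>\<in>space M. sample_var n (\<lambda>j. X j \<omega>) < \<delta> / 2} \<omega> = (1::real)"
    using True assms(2) by simp
  ultimately show ?thesis by (simp only: mult_1_right)
next
  case False
  then have "Z n \<omega> 0 ^ (2*m)
      \<le> (4 / (\<delta> / 2)) ^ m / 2 * ((X 0 \<omega> - \<mu>) ^ (2*m) + (\<Sum>j<n. (X j \<omega> - \<mu>) ^ (2*m)) / real n)"
    using assms \<delta>_pos by (intro standardize_power_le) auto
  then show ?thesis using False by simp
qed

lemma tail_terms_le:
  "real n ^ m * (exp (- var_tail_rate) ^ n + 2 * exp (- mean_tail_rate) ^ n)
    \<le> fact m / var_tail_rate ^ m + 2 * (fact m / mean_tail_rate ^ m)"
proof -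
  have "real n ^ m * exp (- var_tail_rate) ^ n \<le> fact m / var_tail_rate ^ m"
    "real n ^ m * exp (- mean_tail_rate) ^ n \<le> fact m / mean_tail_rate ^ m"
    using power_mult_exp_neg_le[OF var_tail_rate_pos, of n m]
      power_mult_exp_neg_le[OF mean_tail_rate_pos, of n m]
    by (simp_all add: mult.commute flip: exp_of_nat_mult)
  then show ?thesis
    unfolding distrib_left mult.left_commute[of "real n ^ m" 2] by linarith
qed

lemma std_moment_le:
  assumes "0 < n"
  shows "mixed_moment n (2*m) 0 0 0 \<le> std_moment_bound m"
proof -
  let ?S = "{\<omega>\<in>space M. sample_var n (\<lambda>j. X j \<omega>) < \<delta> / 2}"
  let ?sum = "\<lambda>\<omega>. \<Sum>j<n. (X j \<omega> - \<mu>) ^ (2*m)"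
  define R where "R \<omega> = (8 / \<delta>) ^ m / 2 * ((X 0 \<omega> - \<mu>) ^ (2*m) + ?sum \<omega> / real n)
    + real n ^ m * indicator ?S \<omega>" for \<omega>
  have int_sum: "integrable M ?sum"
    by (intro Bochner_Integration.integrable_sum integrable_centred_power_even)
  have int_S: "integrable M (indicator ?S :: 'a \<Rightarrow> real)"
    by (intro integrable_real_indicator) (auto simp: less_top[symmetric])
  have int_Z: "integrable M (\<lambda>\<omega>. Z n \<omega> 0 ^ (2*m))"
    using integrable_monomial4_Z[of "2*m" 0 0 0 n] by (simp add: monomial4_def)
  have "mixed_moment n (2*m) 0 0 0 \<le> (\<integral>\<omega>. R \<omega> \<partial>M)"
    unfolding mixed_moment_def monomial4_def R_def
    using Z_power_le[OF assms] int_Z integrable_centred_power_even int_sum int_S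
    by (intro integral_mono_AE AE_I2) auto
  also have "\<dots> = (8 / \<delta>) ^ m / 2 * ((\<integral>\<omega>. (X 0 \<omega> - \<mu>) ^ (2*m) \<partial>M)
      + (\<Sum>j<n. \<integral>\<omega>. (X j \<omega> - \<mu>) ^ (2*m) \<partial>M) / real n) + real n ^ m * prob ?S"
    unfolding R_def using integrable_centred_power_even int_sum int_S by (simp add: integral_sum)
  also have "\<dots> \<le> (8 / \<delta>) ^ m / 2 * (centred_moment_bound m + centred_moment_bound m)
      + real n ^ m * (exp (- var_tail_rate) ^ n + 2 * exp (- mean_tail_rate) ^ n)"
  proof -
    have "(\<Sum>j<n. \<integral>\<omega>. (X j \<omega> - \<mu>) ^ (2*m) \<partial>M) \<le> (\<Sum>j<n. centred_moment_bound m)"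
      by (intro sum_mono centred_moment_le)
    then have "(\<Sum>j<n. \<integral>\<omega>. (X j \<omega> - \<mu>) ^ (2*m) \<partial>M) / real n \<le> centred_moment_bound m"
      using assms by (simp add: field_simps)
    then show ?thesis
      using centred_moment_le[of 0 m] prob_sample_var_small[OF assms] \<delta>_pos
      by (intro add_mono mult_left_mono) auto
  qed
  also have "\<dots> \<le> std_moment_bound m"
    using tail_terms_le[of n m] by (simp add: std_moment_bound_def)
  finally show ?thesis .
qed

lemma std_moment_bound_nonneg: "0 \<le> std_moment_bound m"
  using std_moment_le[of 1 m] even_mixed_moment_nonneg[of 1 m] by simp

lemma integral_abs_powr_Z_le:
  assumes "0 < n" and "0 \<le> p" and "p \<le> real (2*m)"
  shows "(\<integral>\<omega>. \<bar>Z n \<omega> 0\<bar> powr p \<partial>M) \<le> 1 + std_moment_bound m"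
proof -
  have int: "integrable M (\<lambda>\<omega>. 1 + Z n \<omega> 0 ^ (2*m))"
    using integrable_monomial4_Z[of "2*m" 0 0 0 n] by (simp add: monomial4_def)
  have "(\<integral>\<omega>. \<bar>Z n \<omega> 0\<bar> powr p \<partial>M) \<le> (\<integral>\<omega>. 1 + Z n \<omega> 0 ^ (2*m) \<partial>M)"
  proof (rule integral_mono[OF _ int abs_powr_le_1_add_power_even[OF assms(2,3)]])
    show "integrable M (\<lambda>\<omega>. \<bar>Z n \<omega> 0\<bar> powr p)"
      using abs_powr_le_1_add_power_even[OF assms(2,3)]
      by (intro Bochner_Integration.integrable_bound[OF int]) (auto intro!: AE_I2)
  qed
  also have "\<dots> = 1 + mixed_moment n (2*m) 0 0 0"
    using integrable_monomial4_Z[of "2*m" 0 0 0 n] by (simp add: mixed_moment_def monomial4_def prob_space)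
  also have "\<dots> \<le> 1 + std_moment_bound m" using std_moment_le[OF assms(1)] by simp
  finally show ?thesis .
qed

end

locale iid_columns =
  fixes M :: "'a measure" and A :: "nat \<Rightarrow> nat \<Rightarrow> 'a \<Rightarrow> real"
    and \<mu> :: "nat \<Rightarrow> real" and t0 Cb \<delta> :: real
  assumes column: "\<And>k. iid_exp_moments M (\<lambda>i. A i k) (\<mu> k) t0 Cb \<delta>"
    and col_var_pos: "\<And>n k. 2 \<le> n \<Longrightarrow> AE \<omega> in M. 0 < col_var A n k \<omega>"
begin

abbreviation column_moment :: "nat \<Rightarrow> nat \<Rightarrow> nat \<Rightarrow> nat \<Rightarrow> nat \<Rightarrow> nat \<Rightarrow> real" where
  "column_moment k \<equiv> iid_seq.mixed_moment M (\<lambda>i. A i k)"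

text \<open>Only t0, Cb and \<delta> enter, so this bound on the even moments is uniform in the column.\<close>
definition moment_bound :: real where
  "moment_bound = iid_exp_moments.std_moment_bound t0 Cb \<delta> 2
    + iid_exp_moments.std_moment_bound t0 Cb \<delta> 3 + iid_exp_moments.std_moment_bound t0 Cb \<delta> 4"

lemma column_iid_seq: "iid_seq M (\<lambda>i. A i k)"
  using column[of k] by (rule iid_exp_moments.axioms(1))

lemma sample_var_pos: "2 \<le> n \<Longrightarrow> AE \<omega> in M. 0 < sample_var n (\<lambda>j. A j k \<omega>)"
  using col_var_pos by (simp add: col_var_eq_sample_var)

lemma even_mixed_moments_le:
  assumes "0 < n"
  shows "column_moment k n 4 0 0 0 \<le> moment_bound" "column_moment k n 6 0 0 0 \<le> moment_bound"
    "column_moment k n 8 0 0 0 \<le> moment_bound"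
proof -
  interpret iid_exp_moments M "\<lambda>i. A i k" "\<mu> k" t0 Cb \<delta> by (rule column)
  have "mixed_moment n 4 0 0 0 \<le> std_moment_bound 2" "mixed_moment n 6 0 0 0 \<le> std_moment_bound 3"
    "mixed_moment n 8 0 0 0 \<le> std_moment_bound 4"
    using std_moment_le[OF assms, of 2] std_moment_le[OF assms, of 3] std_moment_le[OF assms, of 4]
    by simp_all
  then show "column_moment k n 4 0 0 0 \<le> moment_bound" "column_moment k n 6 0 0 0 \<le> moment_bound"
    "column_moment k n 8 0 0 0 \<le> moment_bound"
    using std_moment_bound_nonneg[of 2] std_moment_bound_nonneg[of 3] std_moment_bound_nonneg[of 4]
    unfolding moment_bound_def by linarith+
qed

lemma integral_Zst_monomial:
  assumes "1 < n" and "c = 0 \<or> 2 < n" and "d = 0 \<or> 3 < n"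
  shows "(\<integral>\<omega>. Zst A n 0 k \<omega> ^ a * Zst A n 1 k \<omega> ^ b * Zst A n 2 k \<omega> ^ c * Zst A n 3 k \<omega> ^ d \<partial>M)
    = column_moment k n a b c d"
  using assms
  by (auto simp: iid_seq.mixed_moment_def[OF column_iid_seq] monomial4_def Zst_eq_standardize)

lemma unif_bigO_Zst_monomial:
  assumes "\<And>n k. 4 \<le> n \<Longrightarrow> \<bar>column_moment k n a b c d\<bar> \<le> C * g n"
  shows "unif_bigO (\<lambda>n k. \<integral>\<omega>. Zst A n 0 k \<omega> ^ a * Zst A n 1 k \<omega> ^ b * Zst A n 2 k \<omega> ^ c
    * Zst A n 3 k \<omega> ^ d \<partial>M) g"
proof -
  have "\<bar>\<integral>\<omega>. Zst A n 0 k \<omega> ^ a * Zst A n 1 k \<omega> ^ b * Zst A n 2 k \<omega> ^ c * Zst A n 3 k \<omega> ^ d \<partial>M\<bar>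
      \<le> C * g n" if "4 \<le> n" for n k
    using assms[OF that, of k] integral_Zst_monomial[of n c d k a b] that by simp
  then show ?thesis unfolding unif_bigO_def by blast
qed

lemma cross_moment_Zst:
  "2 \<le> n \<Longrightarrow> (\<integral>\<omega>. Zst A n 0 k \<omega> * Zst A n 1 k \<omega> \<partial>M) = - 1 / (real n - 1)"
  using integral_Zst_monomial[of n 0 0 k 1 1] iid_seq.cross_moment[OF column_iid_seq _ sample_var_pos]
  by simp

lemma unif_littleo1_Zst_sq_sq:
  "unif_littleo1 (\<lambda>n k. (\<integral>\<omega>. (Zst A n 0 k \<omega>)\<^sup>2 * (Zst A n 1 k \<omega>)\<^sup>2 \<partial>M) - 1)"
  unfolding unif_littleo1_def
proof (intro allI impI)
  fix \<epsilon> :: real assume "0 < \<epsilon>"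
  obtain N :: nat where N: "(1 + moment_bound) / \<epsilon> \<le> real N" by (meson real_arch_simple)
  have "\<bar>(\<integral>\<omega>. (Zst A n 0 k \<omega>)\<^sup>2 * (Zst A n 1 k \<omega>)\<^sup>2 \<partial>M) - 1\<bar> \<le> \<epsilon>" if "N + 2 \<le> n" for n k
  proof -
    have "real (N + 2) \<le> real n" using that by (simp only: of_nat_le_iff)
    then have "2 \<le> n" "(1 + moment_bound) / \<epsilon> \<le> real n - 1" using N that by simp_all
    then have "(1 + moment_bound) / (real n - 1) \<le> \<epsilon>"
      using \<open>0 < \<epsilon>\<close> by (simp add: field_simps)
    moreover have "\<bar>column_moment k n 2 2 0 0 - 1\<bar> \<le> (1 + moment_bound) / (real n - 1)"
      using iid_seq.mixed_moment_2_2_near_1[OF column_iid_seq \<open>2 \<le> n\<close> sample_var_pos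
        even_mixed_moments_le(1)] \<open>2 \<le> n\<close> by simp
    ultimately show ?thesis
      using integral_Zst_monomial[of n 0 0 k 2 2] \<open>2 \<le> n\<close> by simp
  qed
  then show "\<exists>N. \<forall>n\<ge>N. \<forall>k. \<bar>(\<integral>\<omega>. (Zst A n 0 k \<omega>)\<^sup>2 * (Zst A n 1 k \<omega>)\<^sup>2 \<partial>M) - 1\<bar> \<le> \<epsilon>"
    by blast
qed

lemma unif_bigO_abs_powr_Zst:
  assumes "0 \<le> p"
  shows "unif_bigO (\<lambda>n k. \<integral>\<omega>. \<bar>Zst A n 0 k \<omega>\<bar> powr p \<partial>M) (\<lambda>n. 1)"
proof -
  define m where "m = nat \<lceil>p\<rceil>"
  have "p \<le> real (2*m)" using assms by (simp add: m_def) linarith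
  have "\<bar>\<integral>\<omega>. \<bar>Zst A n 0 k \<omega>\<bar> powr p \<partial>M\<bar> \<le> 1 + iid_exp_moments.std_moment_bound t0 Cb \<delta> m"
    if "1 \<le> n" for n k
    using iid_exp_moments.integral_abs_powr_Z_le[OF column _ assms \<open>p \<le> real (2*m)\<close>, of n k] that
    by (simp add: Zst_eq_standardize integral_nonneg_AE)
  then show ?thesis unfolding unif_bigO_def by (intro exI) auto
qed

lemma Zst_monomial_estimates:
  shows "unif_bigO (\<lambda>n k. \<integral>\<omega>. (Zst A n 0 k \<omega>)^3 * Zst A n 1 k \<omega> \<partial>M) (\<lambda>n. 1 / real n)"
    and "unif_bigO (\<lambda>n k. \<integral>\<omega>. (Zst A n 0 k \<omega>)^2 * Zst A n 1 k \<omega> * Zst A n 2 k \<omega> \<partial>M)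
      (\<lambda>n. 1 / real n)"
    and "unif_bigO (\<lambda>n k. \<integral>\<omega>. Zst A n 0 k \<omega> * Zst A n 1 k \<omega> * Zst A n 2 k \<omega> * Zst A n 3 k \<omega> \<partial>M)
      (\<lambda>n. 1 / (real n)^2)"
    and "unif_bigO (\<lambda>n k. \<integral>\<omega>. (Zst A n 0 k \<omega>)^5 * Zst A n 1 k \<omega> \<partial>M) (\<lambda>n. 1 / real n)"
    and "unif_bigO (\<lambda>n k. \<integral>\<omega>. (Zst A n 0 k \<omega>)^3 * (Zst A n 1 k \<omega>)^3 \<partial>M) (\<lambda>n. 1)"
    and "unif_bigO (\<lambda>n k. \<integral>\<omega>. (Zst A n 0 k \<omega>)^4 * (Zst A n 1 k \<omega>)^2 \<partial>M) (\<lambda>n. 1)"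
    and "unif_bigO (\<lambda>n k. \<integral>\<omega>. (Zst A n 0 k \<omega>)^4 * Zst A n 1 k \<omega> * Zst A n 2 k \<omega> \<partial>M)
      (\<lambda>n. 1 / real n)"
    and "unif_bigO (\<lambda>n k. \<integral>\<omega>. (Zst A n 0 k \<omega>)^3 * (Zst A n 1 k \<omega>)^2 * Zst A n 2 k \<omega> \<partial>M)
      (\<lambda>n. 1 / real n)"
    and "unif_bigO (\<lambda>n k. \<integral>\<omega>. (Zst A n 0 k \<omega>)^3 * Zst A n 1 k \<omega> * Zst A n 2 k \<omega> * Zst A n 3 k \<omega> \<partial>M)
      (\<lambda>n. 1 / (real n)^2)"
proof -
  note order4 = iid_seq.mixed_moment_bounds_order4[OF column_iid_seq _ even_mixed_moments_le(1)]
  note order6 = iid_seq.mixed_moment_bounds_order6[OF column_iid_seq _ even_mixed_moments_le]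
  let ?B = moment_bound
  show "unif_bigO (\<lambda>n k. \<integral>\<omega>. (Zst A n 0 k \<omega>)^3 * Zst A n 1 k \<omega> \<partial>M) (\<lambda>n. 1 / real n)"
    using unif_bigO_Zst_monomial[of 3 1 0 0 "4 * ?B" "\<lambda>n. 1 / real n"] order4(1) by simp
  show "unif_bigO (\<lambda>n k. \<integral>\<omega>. (Zst A n 0 k \<omega>)^2 * Zst A n 1 k \<omega> * Zst A n 2 k \<omega> \<partial>M)
      (\<lambda>n. 1 / real n)"
    using unif_bigO_Zst_monomial[of 2 1 1 0 "8 * ?B" "\<lambda>n. 1 / real n"] order4(2) by simp
  show "unif_bigO (\<lambda>n k. \<integral>\<omega>. Zst A n 0 k \<omega> * Zst A n 1 k \<omega> * Zst A n 2 k \<omega> * Zst A n 3 k \<omega> \<partial>M)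
      (\<lambda>n. 1 / (real n)^2)"
    using unif_bigO_Zst_monomial[of 1 1 1 1 "96 * ?B" "\<lambda>n. 1 / (real n)^2"] order4(3) by simp
  show "unif_bigO (\<lambda>n k. \<integral>\<omega>. (Zst A n 0 k \<omega>)^5 * Zst A n 1 k \<omega> \<partial>M) (\<lambda>n. 1 / real n)"
    using unif_bigO_Zst_monomial[of 5 1 0 0 "4 * ?B" "\<lambda>n. 1 / real n"] order6(1) by simp
  show "unif_bigO (\<lambda>n k. \<integral>\<omega>. (Zst A n 0 k \<omega>)^3 * (Zst A n 1 k \<omega>)^3 \<partial>M) (\<lambda>n. 1)"
    using unif_bigO_Zst_monomial[of 3 3 0 0 ?B "\<lambda>n. 1"] order6(2) by simp
  show "unif_bigO (\<lambda>n k. \<integral>\<omega>. (Zst A n 0 k \<omega>)^4 * (Zst A n 1 k \<omega>)^2 \<partial>M) (\<lambda>n. 1)"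
    using unif_bigO_Zst_monomial[of 4 2 0 0 ?B "\<lambda>n. 1"] order6(3) by simp
  show "unif_bigO (\<lambda>n k. \<integral>\<omega>. (Zst A n 0 k \<omega>)^4 * Zst A n 1 k \<omega> * Zst A n 2 k \<omega> \<partial>M)
      (\<lambda>n. 1 / real n)"
    using unif_bigO_Zst_monomial[of 4 1 1 0 "8 * ?B" "\<lambda>n. 1 / real n"] order6(4) by simp
  show "unif_bigO (\<lambda>n k. \<integral>\<omega>. (Zst A n 0 k \<omega>)^3 * (Zst A n 1 k \<omega>)^2 * Zst A n 2 k \<omega> \<partial>M)
      (\<lambda>n. 1 / real n)"
    using unif_bigO_Zst_monomial[of 3 2 1 0 "8 * ?B" "\<lambda>n. 1 / real n"] order6(5) by simp
  show "unif_bigO (\<lambda>n k. \<integral>\<omega>. (Zst A n 0 k \<omega>)^3 * Zst A n 1 k \<omega> * Zst A n 2 k \<omega> * Zst A n 3 k \<omega> \<partial>M)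
      (\<lambda>n. 1 / (real n)^2)"
    using unif_bigO_Zst_monomial[of 3 1 1 1 "96 * ?B" "\<lambda>n. 1 / (real n)^2"] order6(6) by simp
qed

end

theorem proposition1:
  fixes M :: "'a measure" and A :: "nat \<Rightarrow> nat \<Rightarrow> 'a \<Rightarrow> real"
  assumes P: "prob_space M"
    and meas: "\<And>i k. A i k \<in> borel_measurable M"
    and rows_indep: "\<And>k. prob_space.indep_vars M (\<lambda>_. borel) (\<lambda>i. A i k) UNIV"
    and rows_ident: "\<And>i k. distr M borel (A i k) = distr M borel (A 0 k)"
    and cols_indep: "prob_space.indep_vars M (\<lambda>_. Pi\<^sub>M UNIV (\<lambda>_. borel))
                        (\<lambda>k \<omega>. \<lambda>i. A i k \<omega>) UNIV"
    and s_pos: "\<And>n k. n \<ge> 2 \<Longrightarrow> AE \<omega> in M. col_var A n k \<omega> > 0"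
    and A1: "\<exists>d>0. \<exists>C>0. \<exists>\<epsilon>>0. \<forall>t::real. \<bar>t\<bar> < \<epsilon> \<longrightarrow> (\<forall>i j k. i \<noteq> j \<longrightarrow>
       (let m = (\<integral>\<omega>. A 0 k \<omega> \<partial>M); \<sigma>2 = (\<integral>\<omega>. (A 0 k \<omega> - m)\<^sup>2 \<partial>M) in
         (\<integral>\<^sup>+\<omega>. ennreal (exp (t * ((A i k \<omega> - m)\<^sup>2 - \<sigma>2))) \<partial>M) \<le> ennreal (C * exp (d * t\<^sup>2))
       \<and> (\<integral>\<^sup>+\<omega>. ennreal (exp (t * (A i k \<omega> - m))) \<partial>M) \<le> ennreal (C * exp (d * t\<^sup>2))
       \<and> (\<integral>\<^sup>+\<omega>. ennreal (exp (t * ((A i k \<omega> - m) * (A j k \<omega> - m)))) \<partial>M)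
            \<le> ennreal (C * exp (d * t\<^sup>2))))"
    and A2_min: "\<exists>\<delta>>0. \<forall>k. (\<integral>\<omega>. (A 0 k \<omega> - (\<integral>\<omega>. A 0 k \<omega> \<partial>M))\<^sup>2 \<partial>M) \<ge> \<delta>"
    and A2_max: "\<exists>\<Delta>. \<forall>k. (\<integral>\<omega>. (A 0 k \<omega> - (\<integral>\<omega>. A 0 k \<omega> \<partial>M))\<^sup>2 \<partial>M) \<le> \<Delta>"
  shows
    "(\<forall>n\<ge>2. \<forall>k. (\<integral>\<omega>. Zst A n 0 k \<omega> * Zst A n 1 k \<omega> \<partial>M) = - 1 / (real n - 1))
   \<and> (\<forall>p::real. p \<ge> 1 \<longrightarrow>
        unif_bigO (\<lambda>n k. \<integral>\<omega>. \<bar>Zst A n 0 k \<omega>\<bar> powr p \<partial>M) (\<lambda>n. 1))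
   \<and> unif_littleo1 (\<lambda>n k. (\<integral>\<omega>. (Zst A n 0 k \<omega>)^2 * (Zst A n 1 k \<omega>)^2 \<partial>M) - 1)
   \<and> unif_bigO (\<lambda>n k. \<integral>\<omega>. (Zst A n 0 k \<omega>)^3 * Zst A n 1 k \<omega> \<partial>M) (\<lambda>n. 1 / real n)
   \<and> unif_bigO (\<lambda>n k. \<integral>\<omega>. (Zst A n 0 k \<omega>)^2 * Zst A n 1 k \<omega> * Zst A n 2 k \<omega> \<partial>M)
        (\<lambda>n. 1 / real n)
   \<and> unif_bigO (\<lambda>n k. \<integral>\<omega>. Zst A n 0 k \<omega> * Zst A n 1 k \<omega> * Zst A n 2 k \<omega> * Zst A n 3 k \<omega> \<partial>M)
        (\<lambda>n. 1 / (real n)^2)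
   \<and> unif_bigO (\<lambda>n k. \<integral>\<omega>. (Zst A n 0 k \<omega>)^5 * Zst A n 1 k \<omega> \<partial>M) (\<lambda>n. 1 / real n)
   \<and> unif_bigO (\<lambda>n k. \<integral>\<omega>. (Zst A n 0 k \<omega>)^3 * (Zst A n 1 k \<omega>)^3 \<partial>M) (\<lambda>n. 1)
   \<and> unif_bigO (\<lambda>n k. \<integral>\<omega>. (Zst A n 0 k \<omega>)^4 * (Zst A n 1 k \<omega>)^2 \<partial>M) (\<lambda>n. 1)
   \<and> unif_bigO (\<lambda>n k. \<integral>\<omega>. (Zst A n 0 k \<omega>)^4 * Zst A n 1 k \<omega> * Zst A n 2 k \<omega> \<partial>M)
        (\<lambda>n. 1 / real n)
   \<and> unif_bigO (\<lambda>n k. \<integral>\<omega>. (Zst A n 0 k \<omega>)^3 * (Zst A n 1 k \<omega>)^2 * Zst A n 2 k \<omega> \<partial>M)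
        (\<lambda>n. 1 / real n)
   \<and> unif_bigO (\<lambda>n k. \<integral>\<omega>. (Zst A n 0 k \<omega>)^3 * Zst A n 1 k \<omega> * Zst A n 2 k \<omega> * Zst A n 3 k \<omega> \<partial>M)
        (\<lambda>n. 1 / (real n)^2)"
proof -
  interpret prob_space M by (rule P)
  obtain d C \<epsilon> where "0 < C" "0 < \<epsilon>" and mgf_A: "\<And>t i k. \<bar>t\<bar> < \<epsilon> \<Longrightarrow>
      (\<integral>\<^sup>+\<omega>. ennreal (exp (t * (A i k \<omega> - (\<integral>\<omega>. A 0 k \<omega> \<partial>M)))) \<partial>M) \<le> ennreal (C * exp (d * t\<^sup>2))"
    using A1 unfolding Let_def by (meson n_not_Suc_n)
  obtain \<delta> where "0 < \<delta>" and var: "\<And>k. \<delta> \<le> (\<integral>\<omega>. (A 0 k \<omega> - (\<integral>\<omega>. A 0 k \<omega> \<partial>M))\<^sup>2 \<partial>M)"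
    using A2_min by blast
  have columns: "iid_exp_moments M (\<lambda>i. A i k) (\<integral>\<omega>. A 0 k \<omega> \<partial>M) (\<epsilon> / 2) (C * exp (d * (\<epsilon> / 2)\<^sup>2)) \<delta>" for k
  proof (unfold_locales)
    show "(\<integral>\<^sup>+\<omega>. ennreal (exp (s * (A i k \<omega> - (\<integral>\<omega>. A 0 k \<omega> \<partial>M)))) \<partial>M)
        \<le> ennreal (C * exp (d * (\<epsilon> / 2)\<^sup>2))" if "\<bar>s\<bar> = \<epsilon> / 2" for i s
      using mgf_A[of s i k] that \<open>0 < \<epsilon>\<close> by (simp add: power2_abs[of s, symmetric])
  qed (use meas rows_indep rows_ident \<open>0 < \<epsilon>\<close> \<open>0 < C\<close> \<open>0 < \<delta>\<close> var in auto)
  interpret iid_columns M A "\<lambda>k. \<integral>\<omega>. A 0 k \<omega> \<partial>M" "\<epsilon> / 2" "C * exp (d * (\<epsilon> / 2)\<^sup>2)" \<delta>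
    using columns s_pos by (rule iid_columns.intro)
  show ?thesis
    using cross_moment_Zst unif_bigO_abs_powr_Zst unif_littleo1_Zst_sq_sq Zst_monomial_estimates
    by (simp add: power2_eq_square)
qed

end
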